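(* Let $n$ be a positive integer, $0\le m\le\lfloor n/2\rfloor$ and $0\le k\le m$. Let $M^{(n-m,m)}$ be the complex vector space with basis $\{e_\sigma\}$ indexed by the $m$-element subsets $\sigma$ of $\{1,\dots,n\}$, let $b_0,\dots,b_m$ be complex numbers and let $B=B_{(n-m,m)}$ be the matrix (in the basis $\{e_\sigma\}$) whose $(\sigma,\tau)$ entry is $b_{\#(\sigma\cap\tau)}$. Let $\Omega=\{n-m+1,\dots,n\}$ and define the linear map $\pi:\mathbb{C}[S_n]\to M^{(n-m,m)}$ by $\pi(g)=e_{g(\Omega)}$ for $g\in S_n$. Let $T_k$ be the Young tableau of shape $(n-k,k)$ whose first row contains $1,\dots,n-k$ and whose second row contains $n-k+1,\dots,n$, with row subgroup $R(T_k)$ and column subgroup $C(T_k)$, and let $c_k=\big(\sum_{q\in C(T_k)}\operatorname{sgn}(q)q\big)\big(\sum_{p\in R(T_k)}p\big)\in\mathbb{C}[S_n]$. Then $\pi(c_k)$ is an eigenvector of $B$ with eigenvalue $$\lambda_k=\sum_{j=0}^{k}\sum_{p=0}^{m-k}(-1)^{k-j}\binom{k}{j}\binom{m-j}{p}\binom{n-m-k+j}{m-k-p}\,b_{j+p},$$ and, for generic $b_0,\dots,b_m$, the multiplicity of $\lambda_k$ as an eigenvalue of $B$ is $$f^{(n-k,k)}=\frac{n!\,(n-2k+1)}{k!\,(n-k+1)!}.$$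
   Context: $\#X$ denotes the cardinality of a finite set $X$. The row subgroup $R(T_k)$ (resp. column subgroup $C(T_k)$) consists of the permutations of $\{1,\dots,n\}$ preserving each row (resp. each column) of $T_k$ as a set. Products in the group ring are composition of permutations, $qp=q\circ p$. *)

theory Defs
  imports "Jordan_Normal_Form.Char_Poly" "HOL-Combinatorics.Permutations"
begin

definition msubsets :: "nat \<Rightarrow> nat \<Rightarrow> nat set set" where
  "msubsets n m = {\<sigma>. \<sigma> \<subseteq> {1..n} \<and> card \<sigma> = m}"

text \<open>Action of B on a vector v = sum_tau v(tau) e_tau, given as coordinate function.\<close>
definition Bop :: "nat \<Rightarrow> nat \<Rightarrow> (nat \<Rightarrow> complex) \<Rightarrow> (nat set \<Rightarrow> complex) \<Rightarrow> (nat set \<Rightarrow> complex)" where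
  "Bop n m b v = (\<lambda>\<sigma>. \<Sum>\<tau>\<in>msubsets n m. b (card (\<sigma> \<inter> \<tau>)) * v \<tau>)"

definition subset_list :: "nat \<Rightarrow> nat \<Rightarrow> nat set list" where
  "subset_list n m = (SOME xs. distinct xs \<and> set xs = msubsets n m)"

definition Bmat :: "nat \<Rightarrow> nat \<Rightarrow> (nat \<Rightarrow> complex) \<Rightarrow> complex mat" where
  "Bmat n m b = mat (length (subset_list n m)) (length (subset_list n m))
     (\<lambda>(i, j). b (card (subset_list n m ! i \<inter> subset_list n m ! j)))"

definition eig_mult :: "complex mat \<Rightarrow> complex \<Rightarrow> nat" where
  "eig_mult A x = order x (char_poly A)"

definition tab_rows :: "nat \<Rightarrow> nat \<Rightarrow> nat set set" where
  "tab_rows n k = {{1..n-k}, {n-k+1..n}}"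

definition tab_cols :: "nat \<Rightarrow> nat \<Rightarrow> nat set set" where
  "tab_cols n k = (\<lambda>j. if j \<le> k then {j, n - k + j} else {j}) ` {1..n-k}"

definition row_group :: "nat \<Rightarrow> nat \<Rightarrow> (nat \<Rightarrow> nat) set" where
  "row_group n k = {p. p permutes {1..n} \<and> (\<forall>r\<in>tab_rows n k. p ` r = r)}"

definition col_group :: "nat \<Rightarrow> nat \<Rightarrow> (nat \<Rightarrow> nat) set" where
  "col_group n k = {q. q permutes {1..n} \<and> (\<forall>c\<in>tab_cols n k. q ` c = c)}"

text \<open>pi(c_k), where c_k = (sum_q sgn(q) q)(sum_p p) = sum_q sum_p sgn(q) (q o p),
  and pi(g) = e_{g(Omega)}, Omega = {n-m+1..n}; given as coordinate function.\<close>
definition pi_ck :: "nat \<Rightarrow> nat \<Rightarrow> nat \<Rightarrow> nat set \<Rightarrow> complex" where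
  "pi_ck n m k = (\<lambda>\<sigma>. \<Sum>q\<in>col_group n k. \<Sum>p\<in>row_group n k.
       of_int (sign q) * (if (q \<circ> p) ` {n-m+1..n} = \<sigma> then 1 else 0))"

definition lam :: "nat \<Rightarrow> nat \<Rightarrow> nat \<Rightarrow> (nat \<Rightarrow> complex) \<Rightarrow> complex" where
  "lam n m k b = (\<Sum>j=0..k. \<Sum>p=0..m-k. (-1) ^ (k - j) * of_nat (k choose j)
      * of_nat ((m - j) choose p) * of_nat ((n - m - k + j) choose (m - k - p)) * b (j + p))"

text \<open>Polynomial functions of the parameters b_0,...,b_m (used for "generic").\<close>
inductive_set polyfun :: "nat \<Rightarrow> ((nat \<Rightarrow> complex) \<Rightarrow> complex) set" for m where
  pconst: "(\<lambda>b. c) \<in> polyfun m"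
| pvar: "i \<le> m \<Longrightarrow> (\<lambda>b. b i) \<in> polyfun m"
| padd: "P \<in> polyfun m \<Longrightarrow> Q \<in> polyfun m \<Longrightarrow> (\<lambda>b. P b + Q b) \<in> polyfun m"
| pmult: "P \<in> polyfun m \<Longrightarrow> Q \<in> polyfun m \<Longrightarrow> (\<lambda>b. P b * Q b) \<in> polyfun m"

end

(*
  Write W w (sigma) = sum of w(rho) over the k-subsets rho of sigma for a function w on k-subsets,
  and call w harmonic if its sums over the k-sets containing any given (k-1)-set vanish.
  For harmonic w, the sums of w over the k-sets meeting sigma in exactly j points are forced to be
  (-1)^(k-j) binom(k,j) W w (sigma); grouping the m-sets tau containing rho by |sigma \<inter> tau|
  then shows that W w is an eigenvector of B with eigenvalue lam_k.

  The vector pi(c_k) is a positive multiple of W w0, where w0 = sum of sgn(q) e_{q(R)} over the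
  column group, R being the second row of T_k: the row group acts transitively on the m-sets
  containing R. A sign-reversing involution (swapping within a column) shows that w0 is harmonic,
  and W w0 is 1 at Omega.

  W is injective on harmonic vectors when m + k \<le> n, and the harmonic vectors are the kernel of a
  binom(n,k-1) x binom(n,k) matrix, so the lam_k-eigenspace has dimension at least
  binom(n,k) - binom(n,k-1) = f^(n-k,k). These lower bounds add up to binom(n,m) = dim M, so
  whenever lam_0, ..., lam_m are pairwise distinct -- a polynomial condition on b, satisfied by
  the weights of the Johnson graph -- every algebraic multiplicity equals f^(n-k,k).
*)
theory Submission
  imports Defs "Jordan_Normal_Form.Jordan_Normal_Form_Uniqueness" "Jordan_Normal_Form.Jordan_Normal_Form_Existence"
begin

section \<open>Counting subsets\<close>

lemma msubsets_iff: "\<sigma> \<in> msubsets n r \<longleftrightarrow> \<sigma> \<subseteq> {1..n} \<and> card \<sigma> = r"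
  unfolding msubsets_def by simp

lemma finite_msubsets [simp]: "finite (msubsets n r)"
  unfolding msubsets_def by (rule finite_subset[of _ "Pow {1..n}"]) auto

lemma card_msubsets: "card (msubsets n r) = n choose r"
  unfolding msubsets_def using n_subsets[of "{1..n}" r] by simp

lemma msubsets_finite: "\<sigma> \<in> msubsets n r \<Longrightarrow> finite \<sigma>"
  unfolding msubsets_iff using finite_subset by blast

lemma sum_count_swap:
  fixes f :: "'b \<Rightarrow> 'c :: comm_semiring_1"
  assumes "finite A" "finite B"
  shows "(\<Sum>x\<in>A. sum f {y\<in>B. P x y}) = (\<Sum>y\<in>B. of_nat (card {x\<in>A. P x y}) * f y)"
proof -
  have "(\<Sum>x\<in>A. sum f {y\<in>B. P x y}) = (\<Sum>y\<in>B. \<Sum>x\<in>A. if P x y then f y else 0)"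
    using assms by (simp add: sum.inter_filter sum.swap[of _ A])
  also have "\<dots> = (\<Sum>y\<in>B. of_nat (card {x\<in>A. P x y}) * f y)"
    using assms by (simp add: sum.inter_filter[symmetric])
  finally show ?thesis .
qed

lemma card_supersets_split:
  assumes "finite X" "finite Y" and disj: "X \<inter> Y = {}" "\<rho> \<inter> X = {}" "\<rho> \<inter> Y = {}"
  shows "card {\<tau>. \<rho> \<subseteq> \<tau> \<and> \<tau> \<subseteq> \<rho> \<union> X \<union> Y \<and> card (\<tau> \<inter> X) = p \<and> card (\<tau> \<inter> Y) = q}
     = (card X choose p) * (card Y choose q)"
proof -
  let ?A = "{P. P \<subseteq> X \<and> card P = p}" and ?B = "{Q. Q \<subseteq> Y \<and> card Q = q}"
  let ?f = "\<lambda>(P, Q). \<rho> \<union> P \<union> Q"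
  have parts: "(\<rho> \<union> P \<union> Q) \<inter> X = P" "(\<rho> \<union> P \<union> Q) \<inter> Y = Q" if "P \<subseteq> X" "Q \<subseteq> Y" for P Q
    using that disj by blast+
  have "{\<tau>. \<rho> \<subseteq> \<tau> \<and> \<tau> \<subseteq> \<rho> \<union> X \<union> Y \<and> card (\<tau> \<inter> X) = p \<and> card (\<tau> \<inter> Y) = q} = ?f ` (?A \<times> ?B)"
  proof (intro equalityI subsetI)
    fix \<tau> assume \<tau>: "\<tau> \<in> {\<tau>. \<rho> \<subseteq> \<tau> \<and> \<tau> \<subseteq> \<rho> \<union> X \<union> Y \<and> card (\<tau> \<inter> X) = p \<and> card (\<tau> \<inter> Y) = q}"
    then have "\<tau> = ?f (\<tau> \<inter> X, \<tau> \<inter> Y)" by auto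
    with \<tau> show "\<tau> \<in> ?f ` (?A \<times> ?B)" by blast
  qed (auto simp: parts)
  moreover have "inj_on ?f (?A \<times> ?B)"
    by (rule inj_onI) (clarsimp, metis parts)
  ultimately show ?thesis
    using n_subsets[OF assms(1), of p] n_subsets[OF assms(2), of q]
    by (simp add: card_image card_cartesian_product)
qed

lemma card_delete_one_meeting:
  assumes "finite \<rho>"
  shows "card {x\<in>\<rho>. card ((\<rho> - {x}) \<inter> \<sigma>) = i}
    = (if card (\<rho> \<inter> \<sigma>) = Suc i then Suc i else 0) + (if card (\<rho> \<inter> \<sigma>) = i then card (\<rho> - \<sigma>) else 0)"
proof -
  have "card ((\<rho> - {x}) \<inter> \<sigma>) = card (\<rho> \<inter> \<sigma>) - 1" "card (\<rho> \<inter> \<sigma>) \<noteq> 0" if "x \<in> \<rho> \<inter> \<sigma>" for x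
    using that assms by (auto simp: Diff_Int_distrib2)
  then have "{x\<in>\<rho> \<inter> \<sigma>. card ((\<rho> - {x}) \<inter> \<sigma>) = i} = (if card (\<rho> \<inter> \<sigma>) = Suc i then \<rho> \<inter> \<sigma> else {})"
    by auto
  moreover have "{x\<in>\<rho> - \<sigma>. card ((\<rho> - {x}) \<inter> \<sigma>) = i} = (if card (\<rho> \<inter> \<sigma>) = i then \<rho> - \<sigma> else {})"
    by (auto simp: Int_Diff[symmetric] Diff_Int_distrib2 insert_Diff_if)
  moreover have "{x\<in>\<rho>. card ((\<rho> - {x}) \<inter> \<sigma>) = i}
      = {x\<in>\<rho> \<inter> \<sigma>. card ((\<rho> - {x}) \<inter> \<sigma>) = i} \<union> {x\<in>\<rho> - \<sigma>. card ((\<rho> - {x}) \<inter> \<sigma>) = i}"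
    by blast
  ultimately show ?thesis
    using assms by (simp add: card_Un_disjoint)
qed

lemma msubsets_below_eq_delete_one:
  assumes "\<rho> \<in> msubsets n k" "0 < k"
  shows "{\<rho>'\<in>msubsets n (k - 1). \<rho>' \<subseteq> \<rho>} = (\<lambda>x. \<rho> - {x}) ` \<rho>"
proof (intro equalityI subsetI)
  fix \<rho>' assume "\<rho>' \<in> {\<rho>'\<in>msubsets n (k - 1). \<rho>' \<subseteq> \<rho>}"
  then have sub: "\<rho>' \<subseteq> \<rho>" and "card \<rho>' = k - 1" by (auto simp: msubsets_iff)
  moreover have "finite \<rho>'" using sub msubsets_finite[OF assms(1)] finite_subset by blast
  ultimately have "card (\<rho> - \<rho>') = 1"
    using assms by (simp add: card_Diff_subset msubsets_iff)
  then obtain x where "\<rho> - \<rho>' = {x}" by (auto simp: card_Suc_eq)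
  with sub show "\<rho>' \<in> (\<lambda>x. \<rho> - {x}) ` \<rho>" by blast
qed (use assms in \<open>auto simp: msubsets_iff msubsets_finite\<close>)

section \<open>Harmonic vectors and the up operator\<close>

definition up_op :: "nat \<Rightarrow> nat \<Rightarrow> (nat set \<Rightarrow> 'a::comm_monoid_add) \<Rightarrow> nat set \<Rightarrow> 'a" where
  "up_op n k w \<sigma> = sum w {\<rho>\<in>msubsets n k. \<rho> \<subseteq> \<sigma>}"

definition harmonic :: "nat \<Rightarrow> nat \<Rightarrow> (nat set \<Rightarrow> 'a::comm_monoid_add) \<Rightarrow> bool" where
  "harmonic n k w \<longleftrightarrow> (0 < k \<longrightarrow> (\<forall>\<rho>'\<in>msubsets n (k - 1). sum w {\<rho>\<in>msubsets n k. \<rho>' \<subseteq> \<rho>} = 0))"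

definition meet_sum :: "nat \<Rightarrow> nat \<Rightarrow> (nat set \<Rightarrow> 'a::comm_monoid_add) \<Rightarrow> nat set \<Rightarrow> nat \<Rightarrow> 'a" where
  "meet_sum n k w \<sigma> i = sum w {\<rho>\<in>msubsets n k. card (\<rho> \<inter> \<sigma>) = i}"

lemma meet_sum_recurrence:
  fixes w :: "nat set \<Rightarrow> 'a::comm_semiring_1"
  assumes "harmonic n k w" and "i < k"
  shows "of_nat (Suc i) * meet_sum n k w \<sigma> (Suc i) + of_nat (k - i) * meet_sum n k w \<sigma> i = 0"
proof -
  let ?A = "{\<rho>'\<in>msubsets n (k - 1). card (\<rho>' \<inter> \<sigma>) = i}"
  have k0: "0 < k" using assms(2) by simp
  have count: "card {\<rho>'\<in>?A. \<rho>' \<subseteq> \<rho>}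
      = (if card (\<rho> \<inter> \<sigma>) = Suc i then Suc i else 0) + (if card (\<rho> \<inter> \<sigma>) = i then k - i else 0)"
    if \<rho>: "\<rho> \<in> msubsets n k" for \<rho>
  proof -
    have "{\<rho>'\<in>?A. \<rho>' \<subseteq> \<rho>} = {\<rho>'\<in>{\<rho>'\<in>msubsets n (k - 1). \<rho>' \<subseteq> \<rho>}. card (\<rho>' \<inter> \<sigma>) = i}"
      by auto
    also have "\<dots> = (\<lambda>x. \<rho> - {x}) ` {x\<in>\<rho>. card ((\<rho> - {x}) \<inter> \<sigma>) = i}"
      unfolding msubsets_below_eq_delete_one[OF \<rho> k0] by blast
    moreover have "inj_on (\<lambda>x. \<rho> - {x}) \<rho>" by (rule inj_onI) blast
    moreover have "card (\<rho> - \<sigma>) = k - card (\<rho> \<inter> \<sigma>)"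
      using \<rho> card_Diff_subset_Int[of \<rho> \<sigma>] msubsets_finite[OF \<rho>] by (simp add: msubsets_iff)
    ultimately show ?thesis
      using card_delete_one_meeting[OF msubsets_finite[OF \<rho>], of \<sigma> i]
      by (simp add: card_image inj_on_subset)
  qed
  have "0 = (\<Sum>\<rho>'\<in>?A. sum w {\<rho>\<in>msubsets n k. \<rho>' \<subseteq> \<rho>})"
    using assms unfolding harmonic_def by simp
  also have "\<dots> = (\<Sum>\<rho>\<in>msubsets n k. of_nat (card {\<rho>'\<in>?A. \<rho>' \<subseteq> \<rho>}) * w \<rho>)"
    by (rule sum_count_swap) auto
  also have "\<dots> = (\<Sum>\<rho>\<in>msubsets n k. of_nat (Suc i) * (if card (\<rho> \<inter> \<sigma>) = Suc i then w \<rho> else 0)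
      + of_nat (k - i) * (if card (\<rho> \<inter> \<sigma>) = i then w \<rho> else 0))"
    by (intro sum.cong refl, subst count) (simp_all add: distrib_right)
  also have "\<dots> = of_nat (Suc i) * meet_sum n k w \<sigma> (Suc i) + of_nat (k - i) * meet_sum n k w \<sigma> i"
    by (simp only: meet_sum_def sum.distrib sum_distrib_left[symmetric] sum.inter_filter finite_msubsets)
  finally show ?thesis by simp
qed

lemma meet_sum_harmonic:
  fixes w :: "nat set \<Rightarrow> 'a::field_char_0"
  assumes "harmonic n k w" and "i \<le> k"
  shows "meet_sum n k w \<sigma> i = (-1) ^ (k - i) * of_nat (k choose i) * meet_sum n k w \<sigma> k"
  using assms(2)
proof (induction i rule: inc_induct)
  case (step i)
  let ?N = "meet_sum n k w \<sigma>"
  have "(Suc i) * (k choose Suc i) = (k - i) * (k choose i)"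
    using binomial_absorption[of i k] binomial_absorb_comp[of k i] by simp
  then have binom: "of_nat (Suc i) * of_nat (k choose Suc i) = (of_nat (k - i) * of_nat (k choose i) :: 'a)"
    by (metis of_nat_mult)
  have sign: "(-1 :: 'a) ^ (k - i) = - ((-1) ^ (k - Suc i))"
    using step.hyps(2) by (simp add: Suc_diff_Suc[symmetric])
  have "of_nat (k - i) * ?N i = - (of_nat (Suc i) * ?N (Suc i))"
    using meet_sum_recurrence[OF assms(1) step.hyps(2)] by (simp add: eq_neg_iff_add_eq_0 add.commute)
  also have "\<dots> = - ((-1) ^ (k - Suc i)) * (of_nat (Suc i) * of_nat (k choose Suc i)) * ?N k"
    unfolding step.IH by (simp del: of_nat_Suc add: mult_ac)
  also have "\<dots> = of_nat (k - i) * ((-1) ^ (k - i) * of_nat (k choose i) * ?N k)"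
    unfolding binom sign[symmetric] by (simp add: mult_ac)
  finally show ?case
    using step.hyps(2) by simp
qed simp

lemma meet_sum_top: "meet_sum n k w \<sigma> k = up_op n k w \<sigma>"
proof -
  have "card (\<rho> \<inter> \<sigma>) = k \<longleftrightarrow> \<rho> \<subseteq> \<sigma>" if "\<rho> \<in> msubsets n k" for \<rho>
    using that msubsets_finite[OF that] card_subset_eq[of \<rho> "\<rho> \<inter> \<sigma>"]
    by (auto simp: msubsets_iff Int_absorb2)
  then show ?thesis
    unfolding meet_sum_def up_op_def by (metis (no_types, lifting))
qed

lemma card_superset_decomp:
  assumes "finite \<tau>" "\<rho> \<subseteq> \<tau>" "\<tau> \<subseteq> U"
  shows "card \<tau> = card \<rho> + card (\<tau> \<inter> (\<sigma> - \<rho>)) + card (\<tau> \<inter> (U - (\<sigma> \<union> \<rho>)))"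
    and "card (\<sigma> \<inter> \<tau>) = card (\<sigma> \<inter> \<rho>) + card (\<tau> \<inter> (\<sigma> - \<rho>))"
proof -
  have fin: "finite \<rho>" "finite (\<tau> \<inter> A)" "finite (\<sigma> \<inter> \<rho>)" for A
    using assms rev_finite_subset[of \<tau> \<rho>] by auto
  have "card \<tau> = card ((\<rho> \<union> (\<tau> \<inter> (\<sigma> - \<rho>))) \<union> (\<tau> \<inter> (U - (\<sigma> \<union> \<rho>))))"
    using assms by (intro arg_cong[where f = card]) blast
  also have "\<dots> = card (\<rho> \<union> (\<tau> \<inter> (\<sigma> - \<rho>))) + card (\<tau> \<inter> (U - (\<sigma> \<union> \<rho>)))"
    by (rule card_Un_disjoint) (use fin in auto)
  also have "card (\<rho> \<union> (\<tau> \<inter> (\<sigma> - \<rho>))) = card \<rho> + card (\<tau> \<inter> (\<sigma> - \<rho>))"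
    by (rule card_Un_disjoint) (use fin in auto)
  finally show "card \<tau> = card \<rho> + card (\<tau> \<inter> (\<sigma> - \<rho>)) + card (\<tau> \<inter> (U - (\<sigma> \<union> \<rho>)))" .
  have "card (\<sigma> \<inter> \<tau>) = card ((\<sigma> \<inter> \<rho>) \<union> (\<tau> \<inter> (\<sigma> - \<rho>)))"
    using assms by (intro arg_cong[where f = card]) blast
  also have "\<dots> = card (\<sigma> \<inter> \<rho>) + card (\<tau> \<inter> (\<sigma> - \<rho>))"
    by (rule card_Un_disjoint) (use fin in auto)
  finally show "card (\<sigma> \<inter> \<tau>) = card (\<sigma> \<inter> \<rho>) + card (\<tau> \<inter> (\<sigma> - \<rho>))" .
qed

lemma card_supersets_meeting:
  assumes \<rho>: "\<rho> \<in> msubsets n k" and \<sigma>: "\<sigma> \<in> msubsets n m"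
    and "k \<le> m" "m + k \<le> n" "p \<le> m - k"
  shows "card {\<tau>\<in>msubsets n m. \<rho> \<subseteq> \<tau> \<and> card (\<sigma> \<inter> \<tau>) = card (\<sigma> \<inter> \<rho>) + p}
     = (m - card (\<sigma> \<inter> \<rho>) choose p) * (n - m - k + card (\<sigma> \<inter> \<rho>) choose (m - k - p))"
proof -
  define X where "X = \<sigma> - \<rho>"
  define Y where "Y = {1..n} - (\<sigma> \<union> \<rho>)"
  have fin: "finite \<rho>" "finite \<sigma>" "finite X" "finite Y"
    using \<rho> \<sigma> by (auto simp: X_def Y_def msubsets_finite)
  have cards: "card \<rho> = k" "card \<sigma> = m" "\<rho> \<subseteq> {1..n}" "\<sigma> \<subseteq> {1..n}"
    using \<rho> \<sigma> by (auto simp: msubsets_iff)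
  have decomp: "card \<tau> = k + card (\<tau> \<inter> X) + card (\<tau> \<inter> Y)" "card (\<sigma> \<inter> \<tau>) = card (\<sigma> \<inter> \<rho>) + card (\<tau> \<inter> X)"
    if "finite \<tau>" "\<rho> \<subseteq> \<tau>" "\<tau> \<subseteq> {1..n}" for \<tau>
    using card_superset_decomp[OF that, of \<sigma>] cards unfolding X_def Y_def by auto
  have "{\<tau>\<in>msubsets n m. \<rho> \<subseteq> \<tau> \<and> card (\<sigma> \<inter> \<tau>) = card (\<sigma> \<inter> \<rho>) + p}
    = {\<tau>. \<rho> \<subseteq> \<tau> \<and> \<tau> \<subseteq> \<rho> \<union> X \<union> Y \<and> card (\<tau> \<inter> X) = p \<and> card (\<tau> \<inter> Y) = m - k - p}"
  proof (intro equalityI subsetI)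
    fix \<tau> assume "\<tau> \<in> {\<tau>\<in>msubsets n m. \<rho> \<subseteq> \<tau> \<and> card (\<sigma> \<inter> \<tau>) = card (\<sigma> \<inter> \<rho>) + p}"
    then have \<tau>: "\<tau> \<subseteq> {1..n}" "card \<tau> = m" "finite \<tau>" "\<rho> \<subseteq> \<tau>" "card (\<sigma> \<inter> \<tau>) = card (\<sigma> \<inter> \<rho>) + p"
      by (auto simp: msubsets_iff msubsets_finite)
    then have "\<tau> \<subseteq> \<rho> \<union> X \<union> Y" by (auto simp: X_def Y_def)
    with \<tau> decomp[OF \<tau>(3,4,1)] show "\<tau> \<in> {\<tau>. \<rho> \<subseteq> \<tau> \<and> \<tau> \<subseteq> \<rho> \<union> X \<union> Y \<and> card (\<tau> \<inter> X) = p \<and> card (\<tau> \<inter> Y) = m - k - p}"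
      by simp
  next
    fix \<tau> assume "\<tau> \<in> {\<tau>. \<rho> \<subseteq> \<tau> \<and> \<tau> \<subseteq> \<rho> \<union> X \<union> Y \<and> card (\<tau> \<inter> X) = p \<and> card (\<tau> \<inter> Y) = m - k - p}"
    then have \<tau>: "\<rho> \<subseteq> \<tau>" "\<tau> \<subseteq> \<rho> \<union> X \<union> Y" "card (\<tau> \<inter> X) = p" "card (\<tau> \<inter> Y) = m - k - p"
      by auto
    have "\<tau> \<subseteq> {1..n}" using \<tau>(2) cards by (auto simp: X_def Y_def)
    moreover from this have "finite \<tau>" by (rule finite_subset) simp
    ultimately show "\<tau> \<in> {\<tau>\<in>msubsets n m. \<rho> \<subseteq> \<tau> \<and> card (\<sigma> \<inter> \<tau>) = card (\<sigma> \<inter> \<rho>) + p}"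
      using \<tau> decomp[of \<tau>] cards assms(3,5) by (auto simp: msubsets_iff)
  qed
  moreover have "card X = m - card (\<sigma> \<inter> \<rho>)"
    using fin cards by (simp add: X_def card_Diff_subset_Int)
  moreover have "card Y = n - m - k + card (\<sigma> \<inter> \<rho>)"
  proof -
    have "card (\<sigma> \<union> \<rho>) + card (\<sigma> \<inter> \<rho>) = m + k" "card (\<sigma> \<inter> \<rho>) \<le> k"
      using card_Un_Int[OF fin(2,1)] card_mono[OF fin(1), of "\<sigma> \<inter> \<rho>"] cards by auto
    moreover have "card Y = n - card (\<sigma> \<union> \<rho>)"
      using cards by (simp add: Y_def card_Diff_subset fin)
    ultimately show ?thesis using assms(4) by linarith
  qed
  moreover have "X \<inter> Y = {}" "\<rho> \<inter> X = {}" "\<rho> \<inter> Y = {}"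
    by (auto simp: X_def Y_def)
  ultimately show ?thesis
    using card_supersets_split[OF fin(3,4)] by presburger
qed

definition superset_weight :: "nat \<Rightarrow> nat \<Rightarrow> nat \<Rightarrow> (nat \<Rightarrow> complex) \<Rightarrow> nat \<Rightarrow> complex" where
  "superset_weight n m k b j = (\<Sum>p=0..m-k. of_nat ((m - j) choose p)
     * of_nat ((n - m - k + j) choose (m - k - p)) * b (j + p))"

lemma sum_supersets_eq_superset_weight:
  assumes \<rho>: "\<rho> \<in> msubsets n k" and \<sigma>: "\<sigma> \<in> msubsets n m" and "k \<le> m" "m + k \<le> n"
  shows "(\<Sum>\<tau>\<in>{\<tau>\<in>msubsets n m. \<rho> \<subseteq> \<tau>}. b (card (\<sigma> \<inter> \<tau>))) = superset_weight n m k b (card (\<sigma> \<inter> \<rho>))"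
proof -
  let ?j = "card (\<sigma> \<inter> \<rho>)"
  let ?T = "{\<tau>\<in>msubsets n m. \<rho> \<subseteq> \<tau>}"
  have range: "card (\<sigma> \<inter> \<tau>) = ?j + (card (\<sigma> \<inter> \<tau>) - ?j)" "card (\<sigma> \<inter> \<tau>) - ?j \<in> {0..m-k}"
    if "\<tau> \<in> ?T" for \<tau>
  proof -
    have \<tau>: "finite \<tau>" "\<rho> \<subseteq> \<tau>" "\<tau> \<subseteq> {1..n}" "card \<tau> = m"
      using that by (auto simp: msubsets_iff msubsets_finite)
    from card_superset_decomp[OF \<tau>(1-3), of \<sigma>] \<rho> \<tau>(4)
    show "card (\<sigma> \<inter> \<tau>) = ?j + (card (\<sigma> \<inter> \<tau>) - ?j)" "card (\<sigma> \<inter> \<tau>) - ?j \<in> {0..m-k}"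
      by (auto simp: msubsets_iff)
  qed
  have "(\<Sum>\<tau>\<in>?T. b (card (\<sigma> \<inter> \<tau>)))
      = (\<Sum>p\<in>{0..m-k}. \<Sum>\<tau>\<in>{\<tau>\<in>?T. card (\<sigma> \<inter> \<tau>) - ?j = p}. b (card (\<sigma> \<inter> \<tau>)))"
    by (rule sum.group[symmetric]) (use range in auto)
  also have "\<dots> = (\<Sum>p\<in>{0..m-k}. of_nat (card {\<tau>\<in>msubsets n m. \<rho> \<subseteq> \<tau> \<and> card (\<sigma> \<inter> \<tau>) = ?j + p})
      * b (?j + p))"
  proof (rule sum.cong[OF refl])
    fix p
    have "{\<tau>\<in>?T. card (\<sigma> \<inter> \<tau>) - ?j = p} = {\<tau>\<in>msubsets n m. \<rho> \<subseteq> \<tau> \<and> card (\<sigma> \<inter> \<tau>) = ?j + p}"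
      using range by force
    moreover have "(\<Sum>\<tau>\<in>{\<tau>\<in>?T. card (\<sigma> \<inter> \<tau>) - ?j = p}. b (card (\<sigma> \<inter> \<tau>)))
        = (\<Sum>\<tau>\<in>{\<tau>\<in>?T. card (\<sigma> \<inter> \<tau>) - ?j = p}. b (?j + p))"
      using range by (intro sum.cong) auto
    ultimately show "(\<Sum>\<tau>\<in>{\<tau>\<in>?T. card (\<sigma> \<inter> \<tau>) - ?j = p}. b (card (\<sigma> \<inter> \<tau>)))
      = of_nat (card {\<tau>\<in>msubsets n m. \<rho> \<subseteq> \<tau> \<and> card (\<sigma> \<inter> \<tau>) = ?j + p}) * b (?j + p)"
      by simp
  qed
  also have "\<dots> = superset_weight n m k b ?j"
    unfolding superset_weight_def
    by (intro sum.cong refl) (simp add: card_supersets_meeting[OF \<rho> \<sigma> assms(3,4)])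
  finally show ?thesis .
qed

lemma lam_eq_superset_weight:
  "lam n m k b = (\<Sum>j=0..k. (-1) ^ (k - j) * of_nat (k choose j) * superset_weight n m k b j)"
  unfolding lam_def superset_weight_def by (simp add: sum_distrib_left mult.assoc)

lemma card_Int_msubsets_le: "\<rho> \<in> msubsets n k \<Longrightarrow> card (\<rho> \<inter> \<sigma>) \<le> k"
  by (metis card_mono inf_le1 msubsets_finite msubsets_iff)

lemma Bop_cong: "(\<And>\<tau>. \<tau> \<in> msubsets n m \<Longrightarrow> v \<tau> = v' \<tau>) \<Longrightarrow> Bop n m b v = Bop n m b v'"
  unfolding Bop_def by (simp cong: sum.cong)

lemma Bop_scale: "Bop n m b (\<lambda>\<tau>. c * v \<tau>) \<sigma> = c * Bop n m b v \<sigma>"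
  unfolding Bop_def by (simp add: sum_distrib_left mult_ac)

theorem Bop_up_op_harmonic:
  assumes "harmonic n k w" and "k \<le> m" "m + k \<le> n" and \<sigma>: "\<sigma> \<in> msubsets n m"
  shows "Bop n m b (up_op n k w) \<sigma> = lam n m k b * up_op n k w \<sigma>"
proof -
  have "Bop n m b (up_op n k w) \<sigma>
      = (\<Sum>\<tau>\<in>msubsets n m. \<Sum>\<rho>\<in>{\<rho>\<in>msubsets n k. \<rho> \<subseteq> \<tau>}. b (card (\<sigma> \<inter> \<tau>)) * w \<rho>)"
    unfolding Bop_def up_op_def by (simp add: sum_distrib_left)
  also have "\<dots> = (\<Sum>\<rho>\<in>msubsets n k. \<Sum>\<tau>\<in>{\<tau>\<in>msubsets n m. \<rho> \<subseteq> \<tau>}. b (card (\<sigma> \<inter> \<tau>)) * w \<rho>)"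
    by (rule sum.swap_restrict) auto
  also have "\<dots> = (\<Sum>\<rho>\<in>msubsets n k. superset_weight n m k b (card (\<rho> \<inter> \<sigma>)) * w \<rho>)"
  proof (intro sum.cong refl)
    fix \<rho> assume "\<rho> \<in> msubsets n k"
    then show "(\<Sum>\<tau>\<in>{\<tau>\<in>msubsets n m. \<rho> \<subseteq> \<tau>}. b (card (\<sigma> \<inter> \<tau>)) * w \<rho>)
        = superset_weight n m k b (card (\<rho> \<inter> \<sigma>)) * w \<rho>"
      using sum_supersets_eq_superset_weight[OF _ \<sigma> assms(2,3)]
      by (simp add: sum_distrib_right[symmetric] Int_commute[of \<rho> \<sigma>])
  qed
  also have "\<dots> = (\<Sum>j=0..k. \<Sum>\<rho>\<in>{\<rho>\<in>msubsets n k. card (\<rho> \<inter> \<sigma>) = j}. superset_weight n m k b (card (\<rho> \<inter> \<sigma>)) * w \<rho>)"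
    by (rule sum.group[symmetric]) (auto simp: card_Int_msubsets_le)
  also have "\<dots> = (\<Sum>j=0..k. superset_weight n m k b j * meet_sum n k w \<sigma> j)"
    unfolding meet_sum_def sum_distrib_left by (intro sum.cong refl) auto
  also have "\<dots> = (\<Sum>j=0..k. superset_weight n m k b j * ((-1) ^ (k - j) * of_nat (k choose j) * up_op n k w \<sigma>))"
    by (intro sum.cong refl) (simp add: meet_sum_harmonic[OF assms(1)] meet_sum_top)
  also have "\<dots> = lam n m k b * up_op n k w \<sigma>"
    unfolding lam_eq_superset_weight sum_distrib_right by (intro sum.cong refl) (simp add: algebra_simps)
  finally show ?thesis .
qed

lemma card_msubsets_between:
  assumes "\<rho> \<in> msubsets n k" "\<rho> \<subseteq> T" "T \<subseteq> {1..n}" "k \<le> m"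
  shows "card {\<sigma>\<in>msubsets n m. \<sigma> \<subseteq> T \<and> \<rho> \<subseteq> \<sigma>} = (card T - k) choose (m - k)"
proof -
  have fin: "finite \<rho>" "finite T" "finite (T - \<rho>)"
    using assms(1,3) finite_subset by (auto simp: msubsets_finite)
  have "{\<sigma>\<in>msubsets n m. \<sigma> \<subseteq> T \<and> \<rho> \<subseteq> \<sigma>}
      = {\<tau>. \<rho> \<subseteq> \<tau> \<and> \<tau> \<subseteq> \<rho> \<union> (T - \<rho>) \<union> {} \<and> card (\<tau> \<inter> (T - \<rho>)) = m - k \<and> card (\<tau> \<inter> {}) = 0}"
  proof (intro equalityI subsetI)
    fix \<tau> assume "\<tau> \<in> {\<sigma>\<in>msubsets n m. \<sigma> \<subseteq> T \<and> \<rho> \<subseteq> \<sigma>}"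
    then have "\<tau> \<subseteq> T" "\<rho> \<subseteq> \<tau>" "card \<tau> = m" by (auto simp: msubsets_iff)
    moreover have "\<tau> \<inter> (T - \<rho>) = \<tau> - \<rho>" using \<open>\<tau> \<subseteq> T\<close> by blast
    ultimately show "\<tau> \<in> {\<tau>. \<rho> \<subseteq> \<tau> \<and> \<tau> \<subseteq> \<rho> \<union> (T - \<rho>) \<union> {} \<and> card (\<tau> \<inter> (T - \<rho>)) = m - k \<and> card (\<tau> \<inter> {}) = 0}"
      using assms(1) fin by (auto simp: card_Diff_subset msubsets_iff)
  next
    fix \<tau> assume "\<tau> \<in> {\<tau>. \<rho> \<subseteq> \<tau> \<and> \<tau> \<subseteq> \<rho> \<union> (T - \<rho>) \<union> {} \<and> card (\<tau> \<inter> (T - \<rho>)) = m - k \<and> card (\<tau> \<inter> {}) = 0}"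
    then have \<tau>: "\<rho> \<subseteq> \<tau>" "\<tau> \<subseteq> T" "card (\<tau> \<inter> (T - \<rho>)) = m - k"
      using assms(2) by auto
    moreover have "\<tau> \<inter> (T - \<rho>) = \<tau> - \<rho>" using \<tau>(2) by blast
    moreover have "finite \<tau>" using \<tau>(2) fin finite_subset by blast
    ultimately show "\<tau> \<in> {\<sigma>\<in>msubsets n m. \<sigma> \<subseteq> T \<and> \<rho> \<subseteq> \<sigma>}"
      using assms fin card_mono[of \<tau> \<rho>] by (auto simp: msubsets_iff card_Diff_subset)
  qed
  then show ?thesis
    using card_supersets_split[OF fin(3) finite.emptyI, of \<rho> "m - k" 0] fin assms(1,2)
    by (simp add: card_Diff_subset msubsets_iff)
qed

lemma up_op_zero_imp_sum_within_zero:
  fixes w :: "nat set \<Rightarrow> 'a::field_char_0"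
  assumes zero: "\<forall>\<sigma>\<in>msubsets n m. up_op n k w \<sigma> = 0"
    and T: "T \<subseteq> {1..n}" "m \<le> card T" and "k \<le> m"
  shows "sum w {\<rho>\<in>msubsets n k. \<rho> \<subseteq> T} = 0"
proof -
  let ?c = "(card T - k) choose (m - k)"
  have "0 = (\<Sum>\<sigma>\<in>{\<sigma>\<in>msubsets n m. \<sigma> \<subseteq> T}. up_op n k w \<sigma>)"
    using zero by simp
  also have "\<dots> = (\<Sum>\<rho>\<in>msubsets n k. of_nat (card {\<sigma>\<in>{\<sigma>\<in>msubsets n m. \<sigma> \<subseteq> T}. \<rho> \<subseteq> \<sigma>}) * w \<rho>)"
    unfolding up_op_def by (rule sum_count_swap) auto
  also have "\<dots> = (\<Sum>\<rho>\<in>msubsets n k. of_nat ?c * (if \<rho> \<subseteq> T then w \<rho> else 0))"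
  proof (intro sum.cong refl)
    fix \<rho> assume \<rho>: "\<rho> \<in> msubsets n k"
    have "{\<sigma>\<in>{\<sigma>\<in>msubsets n m. \<sigma> \<subseteq> T}. \<rho> \<subseteq> \<sigma>} = {\<sigma>\<in>msubsets n m. \<sigma> \<subseteq> T \<and> \<rho> \<subseteq> \<sigma>}"
      by auto
    moreover have "{\<sigma>\<in>msubsets n m. \<sigma> \<subseteq> T \<and> \<rho> \<subseteq> \<sigma>} = {}" if "\<not> \<rho> \<subseteq> T"
      using that by auto
    ultimately show "of_nat (card {\<sigma>\<in>{\<sigma>\<in>msubsets n m. \<sigma> \<subseteq> T}. \<rho> \<subseteq> \<sigma>}) * w \<rho>
        = of_nat ?c * (if \<rho> \<subseteq> T then w \<rho> else 0)"
      using card_msubsets_between[OF \<rho> _ T(1) assms(4)] by auto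
  qed
  also have "\<dots> = of_nat ?c * sum w {\<rho>\<in>msubsets n k. \<rho> \<subseteq> T}"
    by (simp add: sum_distrib_left sum.inter_filter)
  moreover have "?c \<noteq> 0"
    using T(2) by simp
  ultimately show ?thesis
    by simp
qed

theorem harmonic_up_op_inj:
  fixes w :: "nat set \<Rightarrow> 'a::field_char_0"
  assumes "harmonic n k w" "k \<le> m" "m + k \<le> n"
    and zero: "\<forall>\<sigma>\<in>msubsets n m. up_op n k w \<sigma> = 0" and \<rho>0: "\<rho>0 \<in> msubsets n k"
  shows "w \<rho>0 = 0"
proof -
  define T where "T = {1..n} - \<rho>0"
  have "card T = n - k"
    using \<rho>0 msubsets_finite[OF \<rho>0] by (simp add: T_def card_Diff_subset msubsets_iff)
  have "meet_sum n k w T k = 0"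
    unfolding meet_sum_top up_op_def
    by (rule up_op_zero_imp_sum_within_zero[OF zero]) (use assms(2,3) \<open>card T = n - k\<close> in \<open>auto simp: T_def\<close>)
  then have "meet_sum n k w T 0 = 0"
    using meet_sum_harmonic[OF assms(1), of 0 T] by simp
  moreover have "{\<rho>\<in>msubsets n k. card (\<rho> \<inter> T) = 0} = {\<rho>0}"
  proof (intro equalityI subsetI)
    fix \<rho> assume "\<rho> \<in> {\<rho>\<in>msubsets n k. card (\<rho> \<inter> T) = 0}"
    then have "\<rho> \<in> msubsets n k" "\<rho> \<subseteq> \<rho>0"
      by (auto simp: T_def msubsets_iff msubsets_finite)
    then show "\<rho> \<in> {\<rho>0}"
      using \<rho>0 card_subset_eq[OF msubsets_finite[OF \<rho>0], of \<rho>] by (simp add: msubsets_iff)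
  qed (use \<rho>0 in \<open>auto simp: T_def\<close>)
  ultimately show ?thesis
    unfolding meet_sum_def by simp
qed

section \<open>The tableau vector\<close>

lemma exists_permutes_image:
  assumes "finite S" "A \<subseteq> S" "B \<subseteq> S" "card A = card B"
  obtains p where "p permutes S" "p ` A = B"
proof -
  have fin: "finite A" "finite B" "finite (S - A)" "finite (S - B)"
    using assms finite_subset by auto
  obtain f where f: "bij_betw f A B"
    using finite_same_card_bij[OF fin(1,2) assms(4)] by blast
  obtain g where g: "bij_betw g (S - A) (S - B)"
    using finite_same_card_bij[OF fin(3,4)] assms by (auto simp: card_Diff_subset fin)
  define p where "p x = (if x \<in> A then f x else if x \<in> S then g x else x)" for x
  have "bij_betw (\<lambda>x. if x \<in> A then f x else g x) (A \<union> (S - A)) (B \<union> (S - B))"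
    by (rule bij_betw_disjoint_Un[OF f g]) auto
  then have "bij_betw p S S"
    using assms(2,3) by (subst bij_betw_cong[where g = "\<lambda>x. if x \<in> A then f x else g x"])
      (auto simp: p_def Un_absorb1)
  then have "p permutes S"
    by (rule bij_imp_permutes) (use assms(2) in \<open>auto simp: p_def\<close>)
  moreover have "p ` A = B"
    using f by (simp add: p_def bij_betw_def cong: image_cong)
  ultimately show ?thesis by (rule that)
qed

lemma permutes_image_eq_iff:
  assumes "p permutes S"
  shows "p ` A = B \<longleftrightarrow> A = inv_into UNIV p ` B"
  using permutes_inverses[OF assms] by (auto simp: image_iff)

lemma permutes_subset_inv_image_iff:
  assumes "p permutes S"
  shows "A \<subseteq> inv_into UNIV p ` B \<longleftrightarrow> p ` A \<subseteq> B"
proof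
  assume "A \<subseteq> inv_into UNIV p ` B"
  then have "p ` A \<subseteq> p ` inv_into UNIV p ` B" by (rule image_mono)
  then show "p ` A \<subseteq> B" using image_f_inv_f[OF permutes_surj[OF assms]] by simp
next
  assume "p ` A \<subseteq> B"
  then have "inv_into UNIV p ` p ` A \<subseteq> inv_into UNIV p ` B" by (rule image_mono)
  then show "A \<subseteq> inv_into UNIV p ` B" using image_inv_f_f[OF permutes_inj[OF assms]] by simp
qed

lemma sum_sign_reversing_involution:
  fixes f :: "'a \<Rightarrow> 'b::field_char_0"
  assumes "\<And>x. x \<in> G \<Longrightarrow> h x \<in> G" "\<And>x. x \<in> G \<Longrightarrow> h (h x) = x" "\<And>x. x \<in> G \<Longrightarrow> f (h x) = - f x"
  shows "sum f G = 0"
proof -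
  have "sum f G = sum (f \<circ> h) G"
    by (rule sum.reindex_bij_witness[of _ h h]) (use assms in auto)
  also have "\<dots> = - sum f G"
    using assms(3) by (simp add: sum_negf)
  finally show ?thesis by simp
qed

lemma ex1_outside_image:
  assumes "inj_on q R" "finite R" "\<rho> \<subseteq> q ` R" "Suc (card \<rho>) = card R"
  shows "\<exists>!b. b \<in> R \<and> q b \<notin> \<rho>"
proof -
  have "card (q ` R - \<rho>) = 1"
    using assms by (simp add: card_Diff_subset card_image finite_subset)
  then obtain y where y: "q ` R - \<rho> = {y}" by (auto simp: card_Suc_eq)
  then have "y \<in> q ` R" by blast
  then obtain b where "b \<in> R" "q b = y" by blast
  moreover have "b' = b" if "b' \<in> R" "q b' \<notin> \<rho>" for b'
    using that y \<open>b \<in> R\<close> \<open>q b = y\<close> assms(1) by (auto dest: inj_onD)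
  ultimately show ?thesis using y by blast
qed

lemma sign_comp_transpose:
  assumes "p permutes S" "finite S" "a \<noteq> b" "a \<in> S" "b \<in> S"
  shows "sign (p \<circ> transpose a b) = - sign p"
  using assms
  by (simp add: sign_compose permutes_imp_permutation permutes_swap_id sign_swap_id)

lemma stabilizer_comp:
  assumes "p \<in> {p. p permutes S \<and> (\<forall>r\<in>F. p ` r = r)}" "q \<in> {p. p permutes S \<and> (\<forall>r\<in>F. p ` r = r)}"
  shows "p \<circ> q \<in> {p. p permutes S \<and> (\<forall>r\<in>F. p ` r = r)}"
proof -
  have "(p \<circ> q) ` r = r" if "r \<in> F" for r
  proof -
    have "p ` r = r" "q ` r = r" using assms that by auto
    then show ?thesis by (simp only: image_comp[symmetric])
  qed
  then show ?thesis
    using assms by (simp add: permutes_compose)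
qed

lemma stabilizer_inv:
  assumes "p \<in> {p. p permutes S \<and> (\<forall>r\<in>F. p ` r = r)}"
  shows "inv_into UNIV p \<in> {p. p permutes S \<and> (\<forall>r\<in>F. p ` r = r)}"
  using assms permutes_image_eq_iff[of p S] by (auto simp: permutes_inv)

lemma finite_stabilizer: "finite S \<Longrightarrow> finite {p. p permutes S \<and> (\<forall>r\<in>F. p ` r = r)}"
  by (rule finite_subset[of _ "{p. p permutes S}"]) (auto simp: finite_permutations)

lemma row_group_iff:
  "p \<in> row_group n k \<longleftrightarrow> p permutes {1..n} \<and> p ` {1..n-k} = {1..n-k} \<and> p ` {n-k+1..n} = {n-k+1..n}"
  unfolding row_group_def tab_rows_def by auto

lemma finite_row_group: "finite (row_group n k)"
  unfolding row_group_def by (simp add: finite_stabilizer)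

lemma finite_col_group: "finite (col_group n k)"
  unfolding col_group_def by (simp add: finite_stabilizer)

lemma id_row_group: "id \<in> row_group n k"
  by (simp add: row_group_def)

lemma id_col_group: "id \<in> col_group n k"
  by (simp add: col_group_def)

lemma row_group_comp: "p \<in> row_group n k \<Longrightarrow> q \<in> row_group n k \<Longrightarrow> p \<circ> q \<in> row_group n k"
  unfolding row_group_def by (rule stabilizer_comp)

lemma col_group_comp: "p \<in> col_group n k \<Longrightarrow> q \<in> col_group n k \<Longrightarrow> p \<circ> q \<in> col_group n k"
  unfolding col_group_def by (rule stabilizer_comp)

lemma row_group_inv: "p \<in> row_group n k \<Longrightarrow> inv_into UNIV p \<in> row_group n k"
  unfolding row_group_def by (rule stabilizer_inv)

lemma col_group_permutes: "q \<in> col_group n k \<Longrightarrow> q permutes {1..n}"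
  by (simp add: col_group_def)

lemma permutes_image_msubsets:
  assumes "p permutes {1..n}" "\<sigma> \<in> msubsets n m"
  shows "p ` \<sigma> \<in> msubsets n m"
  using assms permutes_image[OF assms(1)] card_image[OF inj_on_subset[OF permutes_inj_on[OF assms(1)]]]
  by (auto simp: msubsets_iff card_image permutes_inj_on inj_on_subset)

definition row_fiber :: "nat \<Rightarrow> nat \<Rightarrow> nat \<Rightarrow> nat set \<Rightarrow> nat" where
  "row_fiber n m k X = card {p\<in>row_group n k. p ` {n-m+1..n} = X}"

lemma row_fiber_image:
  assumes p: "p \<in> row_group n k"
  shows "row_fiber n m k (p ` X) = row_fiber n m k X"
  unfolding row_fiber_def
proof (rule bij_betw_same_card[of "\<lambda>h. inv_into UNIV p \<circ> h"], rule bij_betw_byWitness[where f' = "\<lambda>h. p \<circ> h"])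
  have perm: "p permutes {1..n}" using p by (simp add: row_group_iff)
  note inv = permutes_inv_o[OF perm]
  note [simp] = image_inv_f_f[OF permutes_inj[OF perm]]
  show "\<forall>h\<in>{h\<in>row_group n k. h ` {n-m+1..n} = p ` X}. p \<circ> (inv_into UNIV p \<circ> h) = h"
    by (simp add: o_assoc inv)
  show "\<forall>h\<in>{h\<in>row_group n k. h ` {n-m+1..n} = X}. inv_into UNIV p \<circ> (p \<circ> h) = h"
    by (simp add: o_assoc inv)
  show "(\<lambda>h. inv_into UNIV p \<circ> h) ` {h\<in>row_group n k. h ` {n-m+1..n} = p ` X}
      \<subseteq> {h\<in>row_group n k. h ` {n-m+1..n} = X}"
  proof
    fix g assume "g \<in> (\<lambda>h. inv_into UNIV p \<circ> h) ` {h\<in>row_group n k. h ` {n-m+1..n} = p ` X}"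
    then obtain h where h: "h \<in> row_group n k" "h ` {n-m+1..n} = p ` X" and g: "g = inv_into UNIV p \<circ> h"
      by auto
    have "g ` {n-m+1..n} = inv_into UNIV p ` (h ` {n-m+1..n})"
      unfolding g by (rule image_comp[symmetric])
    with h g row_group_comp[OF row_group_inv[OF p] h(1)]
    show "g \<in> {h\<in>row_group n k. h ` {n-m+1..n} = X}" by simp
  qed
  show "(\<lambda>h. p \<circ> h) ` {h\<in>row_group n k. h ` {n-m+1..n} = X} \<subseteq> {h\<in>row_group n k. h ` {n-m+1..n} = p ` X}"
  proof
    fix g assume "g \<in> (\<lambda>h. p \<circ> h) ` {h\<in>row_group n k. h ` {n-m+1..n} = X}"
    then obtain h where h: "h \<in> row_group n k" "h ` {n-m+1..n} = X" and g: "g = p \<circ> h"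
      by auto
    have "g ` {n-m+1..n} = p ` (h ` {n-m+1..n})"
      unfolding g by (rule image_comp[symmetric])
    with h g row_group_comp[OF p h(1)]
    show "g \<in> {h\<in>row_group n k. h ` {n-m+1..n} = p ` X}" by simp
  qed
qed

lemma row_fiber_Omega_pos: "0 < row_fiber n m k {n-m+1..n}"
  unfolding row_fiber_def using finite_row_group id_row_group
  by (auto simp: card_gt_0_iff intro!: exI[of _ id])

lemma row_fiber_eq:
  assumes "k \<le> m" "m \<le> n" and X: "X \<in> msubsets n m"
  shows "row_fiber n m k X = (if {n-k+1..n} \<subseteq> X then row_fiber n m k {n-m+1..n} else 0)"
proof (cases "{n-k+1..n} \<subseteq> X")
  case True
  let ?A = "{n-m+1..n-k}" and ?B = "X - {n-k+1..n}"
  have "card ?B = m - k"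
    using True X assms(1,2) by (simp add: card_Diff_subset msubsets_iff msubsets_finite)
  moreover have "?B \<subseteq> {1..n-k}" using X by (auto simp: msubsets_iff)
  ultimately obtain p where p: "p permutes {1..n-k}" "p ` ?A = ?B"
    using exists_permutes_image[of "{1..n-k}" ?A ?B] assms(1,2) by auto
  have fix2: "p ` {n-k+1..n} = {n-k+1..n}"
    using permutes_not_in[OF p(1)] by force
  have "p \<in> row_group n k"
    unfolding row_group_iff using permutes_subset[OF p(1)] permutes_image[OF p(1)] fix2 by auto
  moreover have "p ` {n-m+1..n} = X"
  proof -
    have "{n-m+1..n} = ?A \<union> {n-k+1..n}" using assms(1,2) by auto
    then have "p ` {n-m+1..n} = ?B \<union> {n-k+1..n}" by (simp only: image_Un p(2) fix2)
    with True show ?thesis by blast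
  qed
  ultimately show ?thesis
    using row_fiber_image[of p n k m "{n-m+1..n}"] True by simp
next
  case False
  have "p ` {n-m+1..n} \<noteq> X" if "p \<in> row_group n k" for p
  proof -
    have "{n-k+1..n} = p ` {n-k+1..n}" using that by (simp add: row_group_iff)
    also have "\<dots> \<subseteq> p ` {n-m+1..n}" using assms(1) by (intro image_mono) auto
    finally show ?thesis using False by blast
  qed
  then have empty: "{p\<in>row_group n k. p ` {n-m+1..n} = X} = {}" by blast
  show ?thesis
    unfolding row_fiber_def empty using False by simp
qed

definition col_alt :: "nat \<Rightarrow> nat \<Rightarrow> nat set \<Rightarrow> complex" where
  "col_alt n k \<rho> = (\<Sum>q\<in>col_group n k. if q ` {n-k+1..n} = \<rho> then of_int (sign q) else 0)"

lemma sum_col_alt: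
  assumes "k \<le> n"
  shows "sum (col_alt n k) {\<rho>\<in>msubsets n k. P \<rho>}
    = (\<Sum>q\<in>col_group n k. if P (q ` {n-k+1..n}) then of_int (sign q) else 0)"
proof -
  have "q ` {n-k+1..n} \<in> msubsets n k" if "q \<in> col_group n k" for q
    using permutes_image_msubsets[OF col_group_permutes[OF that]] assms by (simp add: msubsets_iff)
  then show ?thesis
    unfolding col_alt_def by (subst sum.swap) (simp add: sum.delta' if_distrib cong: if_cong)
qed

lemma up_op_col_alt:
  "k \<le> n \<Longrightarrow> up_op n k (col_alt n k) \<sigma>
    = (\<Sum>q\<in>col_group n k. if q ` {n-k+1..n} \<subseteq> \<sigma> then of_int (sign q) else 0)"
  unfolding up_op_def by (rule sum_col_alt)

lemma pi_ck_eq_up_op: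
  assumes "k \<le> m" "m \<le> n" and \<sigma>: "\<sigma> \<in> msubsets n m"
  shows "pi_ck n m k \<sigma> = of_nat (row_fiber n m k {n-m+1..n}) * up_op n k (col_alt n k) \<sigma>"
proof -
  have "pi_ck n m k \<sigma> = (\<Sum>q\<in>col_group n k. of_int (sign q) * of_nat (row_fiber n m k (inv_into UNIV q ` \<sigma>)))"
    unfolding pi_ck_def row_fiber_def
  proof (intro sum.cong refl)
    fix q assume "q \<in> col_group n k"
    then have "(q \<circ> p) ` {n-m+1..n} = \<sigma> \<longleftrightarrow> p ` {n-m+1..n} = inv_into UNIV q ` \<sigma>" for p
      unfolding image_comp[symmetric] by (rule permutes_image_eq_iff[OF col_group_permutes])
    then show "(\<Sum>p\<in>row_group n k. of_int (sign q) * (if (q \<circ> p) ` {n-m+1..n} = \<sigma> then 1 else 0))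
        = of_int (sign q) * of_nat (card {p\<in>row_group n k. p ` {n-m+1..n} = inv_into UNIV q ` \<sigma>})"
      by (simp add: sum_distrib_left[symmetric] sum.If_cases finite_row_group Int_def)
  qed
  also have "\<dots> = (\<Sum>q\<in>col_group n k. of_int (sign q)
      * (if q ` {n-k+1..n} \<subseteq> \<sigma> then of_nat (row_fiber n m k {n-m+1..n}) else 0))"
  proof (intro sum.cong refl)
    fix q assume q: "q \<in> col_group n k"
    note perm = col_group_permutes[OF q]
    have "inv_into UNIV q ` \<sigma> \<in> msubsets n m"
      by (rule permutes_image_msubsets[OF permutes_inv[OF perm] \<sigma>])
    moreover note permutes_subset_inv_image_iff[OF perm, of "{n-k+1..n}" \<sigma>]
    ultimately show "of_int (sign q) * of_nat (row_fiber n m k (inv_into UNIV q ` \<sigma>))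
        = of_int (sign q) * (if q ` {n-k+1..n} \<subseteq> \<sigma> then of_nat (row_fiber n m k {n-m+1..n}) else 0)"
      using row_fiber_eq[OF assms(1,2)] by simp
  qed
  also have "\<dots> = of_nat (row_fiber n m k {n-m+1..n}) * up_op n k (col_alt n k) \<sigma>"
    using assms by (simp add: up_op_col_alt sum_distrib_left if_distrib mult.commute cong: if_cong)
  finally show ?thesis .
qed

lemma col_group_image_in_column:
  assumes q: "q \<in> col_group n k" and "2 * k \<le> n" "x \<in> {1..n}"
  shows "q x = x \<or> (x \<le> k \<and> q x = x + (n - k)) \<or> (n - k < x \<and> q x = x - (n - k))"
proof -
  define j where "j = (if x \<le> n - k then x else x - (n - k))"
  define c where "c = (if j \<le> k then {j, n - k + j} else {j})"
  have "j \<in> {1..n-k}" "x \<in> c" using assms(2,3) by (auto simp: j_def c_def)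
  then have "c \<in> tab_cols n k" "x \<in> c" unfolding tab_cols_def c_def by auto
  then have "q x \<in> c" using q unfolding col_group_def by blast
  then show ?thesis using assms(2,3) unfolding c_def j_def by (auto split: if_splits)
qed

lemma col_group_bottom_row_in_Omega:
  assumes q: "q \<in> col_group n k" and "k \<le> m" "2 * m \<le> n"
    and sub: "q ` {n-k+1..n} \<subseteq> {n-m+1..n}"
  shows "q = id"
proof
  fix x
  have kn: "2 * k \<le> n" using assms(2,3) by simp
  note cases = col_group_image_in_column[OF q kn]
  have bottom: "q y = y" if y: "y \<in> {n-k+1..n}" for y
  proof -
    have "q y \<in> {n-m+1..n}" using sub y by blast
    moreover have "y - (n - k) \<notin> {n-m+1..n}" using y assms(2,3) by auto
    ultimately show ?thesis using cases[of y] y kn by auto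
  qed
  show "q x = id x"
  proof (cases "x \<in> {1..n}")
    case x: True
    show ?thesis
    proof (cases "x \<le> k")
      case True
      have "q x \<noteq> x + (n - k)"
      proof
        assume "q x = x + (n - k)"
        also have "\<dots> = q (x + (n - k))"
          using True x kn by (intro bottom[symmetric]) auto
        finally have "x = x + (n - k)"
          by (rule injD[OF permutes_inj[OF col_group_permutes[OF q]]])
        then show False using True x kn by simp
      qed
      then show ?thesis using cases[OF x] True kn by auto
    next
      case False
      then show ?thesis using cases[OF x] bottom[of x] x by (cases "n - k < x") auto
    qed
  next
    case False
    then show ?thesis using permutes_not_in[OF col_group_permutes[OF q]] by simp
  qed
qed

lemma up_op_col_alt_Omega:
  assumes "k \<le> m" "2 * m \<le> n"
  shows "up_op n k (col_alt n k) {n-m+1..n} = 1"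
proof -
  have "{q\<in>col_group n k. q ` {n-k+1..n} \<subseteq> {n-m+1..n}} = {id}"
    using col_group_bottom_row_in_Omega[OF _ assms] id_col_group assms by auto
  then show ?thesis
    using assms by (simp add: up_op_col_alt sum.If_cases finite_col_group Int_def)
qed

lemma col_group_transpose:
  assumes "1 \<le> j" "j \<le> k" "2 * k \<le> n"
  shows "transpose j (n - k + j) \<in> col_group n k"
proof -
  have "transpose j (n - k + j) ` c = c" if "c \<in> tab_cols n k" for c
  proof -
    from that obtain i where "i \<in> {1..n-k}" and c: "c = (if i \<le> k then {i, n - k + i} else {i})"
      unfolding tab_cols_def by blast
    then have "j \<in> c \<longleftrightarrow> n - k + j \<in> c" using assms by auto
    then show ?thesis by (rule transpose_image_eq)
  qed
  moreover have "transpose j (n - k + j) permutes {1..n}"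
    using assms by (intro permutes_swap_id) auto
  ultimately show ?thesis by (simp add: col_group_def)
qed

lemma col_group_swap_bottom:
  assumes "2 * k \<le> n" and q: "q \<in> col_group n k" and sub: "\<rho>' \<subseteq> q ` {n-k+1..n}"
    and b: "b \<in> {n-k+1..n}" "q b \<notin> \<rho>'"
  defines "q' \<equiv> q \<circ> transpose (b - (n - k)) b"
  shows "q' \<in> col_group n k" "\<rho>' \<subseteq> q' ` {n-k+1..n}" "q' b \<notin> \<rho>'" "sign q' = - sign q"
proof -
  define a where "a = b - (n - k)"
  have a: "a \<notin> {n-k+1..n}" "a \<in> {1..n}" "b = n - k + a" "1 \<le> a" "a \<le> k" "a \<noteq> b"
    using b assms(1) unfolding a_def by auto
  have q': "q' = q \<circ> transpose a b" unfolding q'_def a_def ..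
  show "q' \<in> col_group n k"
    unfolding q' a(3) using col_group_comp[OF q col_group_transpose[OF a(4,5) assms(1)]] .
  show "\<rho>' \<subseteq> q' ` {n-k+1..n}"
  proof
    fix z assume "z \<in> \<rho>'"
    with sub obtain y where "y \<in> {n-k+1..n}" "z = q y" by blast
    moreover from this have "y \<noteq> b" "y \<noteq> a" using a b \<open>z \<in> \<rho>'\<close> by auto
    ultimately show "z \<in> q' ` {n-k+1..n}" unfolding q' by (auto intro!: image_eqI[of _ _ y])
  qed
  have "q a \<notin> q ` {n-k+1..n}"
    using a(1) inj_image_mem_iff[OF permutes_inj[OF col_group_permutes[OF q]]] by simp
  then show "q' b \<notin> \<rho>'" using sub by (auto simp: q')
  show "sign q' = - sign q"
    unfolding q' using a b by (intro sign_comp_transpose[OF col_group_permutes[OF q]]) auto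
qed

theorem harmonic_col_alt:
  assumes "2 * k \<le> n"
  shows "harmonic n k (col_alt n k)"
  unfolding harmonic_def
proof (intro impI ballI)
  fix \<rho>' assume "0 < k" and \<rho>': "\<rho>' \<in> msubsets n (k - 1)"
  let ?R = "{n-k+1..n}"
  let ?G = "{q\<in>col_group n k. \<rho>' \<subseteq> q ` ?R}"
  have ex1: "\<exists>!b. b \<in> ?R \<and> q b \<notin> \<rho>'" if "q \<in> ?G" for q
    using that \<rho>' \<open>0 < k\<close> assms permutes_inj_on[OF col_group_permutes]
    by (intro ex1_outside_image) (auto simp: msubsets_iff)
  define miss where "miss q = (THE b. b \<in> ?R \<and> q b \<notin> \<rho>')" for q :: "nat \<Rightarrow> nat"
  have miss: "miss q \<in> ?R" "q (miss q) \<notin> \<rho>'" if "q \<in> ?G" for q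
    using theI'[OF ex1[OF that]] unfolding miss_def by auto
  define swap where "swap q = q \<circ> transpose (miss q - (n - k)) (miss q)" for q :: "nat \<Rightarrow> nat"
  have swap: "swap q \<in> ?G" "miss (swap q) = miss q" "sign (swap q) = - sign q" if q: "q \<in> ?G" for q
  proof -
    have qC: "q \<in> col_group n k" and sub: "\<rho>' \<subseteq> q ` ?R" using q by auto
    note swapped = col_group_swap_bottom[OF assms qC sub miss[OF q], folded swap_def]
    from swapped(1,2) show G: "swap q \<in> ?G" by simp
    show "miss (swap q) = miss q"
      unfolding miss_def[of "swap q"] using miss(1)[OF q] swapped(3)
      by (intro the1_equality[OF ex1[OF G]]) simp
    show "sign (swap q) = - sign q"
      by (rule swapped(4))
  qed
  have "sum (col_alt n k) {\<rho>\<in>msubsets n k. \<rho>' \<subseteq> \<rho>}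
      = (\<Sum>q\<in>col_group n k. if \<rho>' \<subseteq> q ` ?R then of_int (sign q) else 0)"
    using assms by (intro sum_col_alt) simp
  also have "\<dots> = (\<Sum>q\<in>?G. of_int (sign q))"
    by (simp add: sum.If_cases finite_col_group Int_def)
  also have "\<dots> = 0"
  proof (rule sum_sign_reversing_involution[where h = swap])
    fix q assume q: "q \<in> ?G"
    show "swap q \<in> ?G" "of_int (sign (swap q)) = - (of_int (sign q) :: complex)"
      using swap[OF q] by simp_all
    show "swap (swap q) = q"
      using swap(2)[OF q] by (simp add: swap_def o_assoc[symmetric])
  qed
  finally show "sum (col_alt n k) {\<rho>\<in>msubsets n k. \<rho>' \<subseteq> \<rho>} = 0" .
qed

theorem pi_ck_eigenvector:
  assumes "k \<le> m" "2 * m \<le> n"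
  shows "(\<exists>\<sigma>\<in>msubsets n m. pi_ck n m k \<sigma> \<noteq> 0)"
    and "\<sigma> \<in> msubsets n m \<Longrightarrow> Bop n m b (pi_ck n m k) \<sigma> = lam n m k b * pi_ck n m k \<sigma>"
proof -
  let ?c = "of_nat (row_fiber n m k {n-m+1..n}) :: complex"
  have pi: "pi_ck n m k \<tau> = ?c * up_op n k (col_alt n k) \<tau>" if "\<tau> \<in> msubsets n m" for \<tau>
    using pi_ck_eq_up_op[OF assms(1) _ that] assms by simp
  have "{n-m+1..n} \<in> msubsets n m" using assms by (simp add: msubsets_iff)
  moreover have "pi_ck n m k {n-m+1..n} \<noteq> 0"
    using pi[OF calculation] up_op_col_alt_Omega[OF assms] row_fiber_Omega_pos[of n m k] by simp
  ultimately show "\<exists>\<sigma>\<in>msubsets n m. pi_ck n m k \<sigma> \<noteq> 0" ..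
  assume \<sigma>: "\<sigma> \<in> msubsets n m"
  have "Bop n m b (pi_ck n m k) \<sigma> = ?c * Bop n m b (up_op n k (col_alt n k)) \<sigma>"
    using Bop_cong[of n m "pi_ck n m k" "\<lambda>\<tau>. ?c * up_op n k (col_alt n k) \<tau>" b] pi
    by (simp add: Bop_scale)
  also have "\<dots> = lam n m k b * pi_ck n m k \<sigma>"
    using Bop_up_op_harmonic[OF harmonic_col_alt _ _ \<sigma>] assms pi[OF \<sigma>] by simp
  finally show "Bop n m b (pi_ck n m k) \<sigma> = lam n m k b * pi_ck n m k \<sigma>" .
qed

section \<open>Matrices and multiplicities\<close>

lemma sum_order_le_degree_inj:
  fixes p :: "'a::idom poly"
  assumes "p \<noteq> 0" "inj_on g J" "finite J"
  shows "(\<Sum>j\<in>J. Polynomial.order (g j) p) \<le> degree p"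
proof -
  have "(\<Sum>j\<in>J. Polynomial.order (g j) p) = (\<Sum>x\<in>g ` J. Polynomial.order x p)"
    by (simp add: sum.reindex[OF assms(2)])
  also have "\<dots> = (\<Sum>x\<in>g ` J \<inter> {x. poly p x = 0}. Polynomial.order x p)"
    by (rule sum.mono_neutral_right) (auto simp: assms(3) order_0I)
  also have "\<dots> \<le> (\<Sum>x | poly p x = 0. Polynomial.order x p)"
    by (rule sum_mono2) (auto simp: poly_roots_finite[OF assms(1)])
  also have "\<dots> \<le> degree p"
    by (rule sum_order_le_degree[OF assms(1)])
  finally show ?thesis .
qed

lemma sum_order_char_poly_le:
  fixes A :: "'a::field mat"
  assumes "A \<in> carrier_mat N N" "inj_on g J" "finite J"
  shows "(\<Sum>j\<in>J. Polynomial.order (g j) (char_poly A)) \<le> N"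
proof -
  have "degree (char_poly A) = N" "coeff (char_poly A) N = 1"
    using degree_monic_char_poly[OF assms(1)] by auto
  then have "char_poly A \<noteq> 0" by auto
  with \<open>degree (char_poly A) = N\<close> show ?thesis
    using sum_order_le_degree_inj[OF _ assms(2,3), of "char_poly A"] by simp
qed

lemma kernel_dim_char_matrix_le_order:
  fixes A :: "complex mat"
  assumes A: "A \<in> carrier_mat N N"
  shows "kernel_dim (char_matrix A e) \<le> Polynomial.order e (char_poly A)"
proof -
  obtain as where "char_poly A = (\<Prod>a\<leftarrow>as. [:- a, 1:])"
    using char_poly_factorized[OF A] by blast
  from jordan_nf_exists[OF A this] obtain n_as where jnf: "jordan_nf A n_as" by blast
  have "kernel_dim (char_matrix A e) = dim_gen_eigenspace A e 1"
    unfolding dim_gen_eigenspace_def using A by simp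
  also have "\<dots> = (\<Sum>n\<leftarrow>map fst [(n, e')\<leftarrow>n_as . e' = e]. min 1 n)"
    by (rule dim_gen_eigenspace[OF jnf])
  also have "\<dots> \<le> (\<Sum>n\<leftarrow>map fst [(n, e')\<leftarrow>n_as . e' = e]. n)"
    by (rule sum_list_mono) simp
  also have "\<dots> = Polynomial.order e (char_poly A)"
    unfolding jordan_nf_order[OF jnf] by (induction n_as) (auto split: prod.splits)
  finally show ?thesis .
qed

lemma kernel_dim_ge_diff:
  fixes A :: "'a::field mat"
  assumes A: "A \<in> carrier_mat nr nc"
  shows "nc - nr \<le> kernel.dim nc A"
proof -
  obtain G where gj: "gauss_jordan_single A = G" by auto
  note g = gauss_jordan_single[OF A gj]
  from g(4) obtain P Q where GPA: "G = P * A" and P: "P \<in> carrier_mat nr nr"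
    and Q: "Q \<in> carrier_mat nr nr" and QP: "Q * P = 1\<^sub>m nr" by blast
  have "card {i. i < nr \<and> row G i \<noteq> 0\<^sub>v nc} \<le> card {..<nr}"
    by (rule card_mono) auto
  then have "nc - nr \<le> nc - card {i. i < nr \<and> row G i \<noteq> 0\<^sub>v nc}" by simp
  also have "\<dots> = kernel.dim nc G"
    using find_base_vectors(6)[OF g(3) g(2)] by simp
  also have "mat_kernel G = mat_kernel A"
    unfolding GPA by (rule mat_kernel_mult_eq[OF A P Q QP])
  finally show ?thesis .
qed

lemma (in kernel) mult_mat_vec_lincomb:
  assumes W: "W \<in> carrier_mat N nc" and U: "U \<subseteq> mat_kernel A"
  shows "W *\<^sub>v lincomb a U = vec N (\<lambda>i. \<Sum>x\<in>U. a x * (W *\<^sub>v x) $ i)"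
proof -
  have Uc: "U \<subseteq> carrier_vec nc" using U mat_kernelD(1)[OF A] by blast
  have z: "lincomb a U \<in> carrier_vec nc"
    using Ker.lincomb_closed[OF U] mat_kernelD(1)[OF A] by blast
  show ?thesis
  proof (rule eq_vecI)
    fix i assume "i < dim_vec (vec N (\<lambda>i. \<Sum>x\<in>U. a x * (W *\<^sub>v x) $ i))"
    then have i: "i < N" by simp
    have "(W *\<^sub>v lincomb a U) $ i = (\<Sum>j<nc. W $$ (i, j) * (\<Sum>x\<in>U. a x * x $ j))"
      using W z i lincomb_index[OF _ U] by (simp add: scalar_prod_def atLeast0LessThan)
    also have "\<dots> = (\<Sum>x\<in>U. a x * (\<Sum>j<nc. W $$ (i, j) * x $ j))"
      by (simp add: sum_distrib_left sum.swap[of _ U] algebra_simps)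
    also have "\<dots> = (\<Sum>x\<in>U. a x * (W *\<^sub>v x) $ i)"
      using W i Uc by (intro sum.cong refl) (auto simp: scalar_prod_def atLeast0LessThan)
    finally show "(W *\<^sub>v lincomb a U) $ i = vec N (\<lambda>i. \<Sum>x\<in>U. a x * (W *\<^sub>v x) $ i) $ i"
      using i by simp
  qed (use W in simp)
qed

lemma inj_on_mult_mat_vec_kernel:
  fixes A :: "'a::field mat"
  assumes A: "A \<in> carrier_mat nr nc" and W: "W \<in> carrier_mat N nc"
    and inj: "\<And>x. x \<in> mat_kernel A \<Longrightarrow> W *\<^sub>v x = 0\<^sub>v N \<Longrightarrow> x = 0\<^sub>v nc"
  shows "inj_on (\<lambda>x. W *\<^sub>v x) (mat_kernel A)"
proof (rule inj_onI)
  fix x y assume x: "x \<in> mat_kernel A" and y: "y \<in> mat_kernel A" and e: "W *\<^sub>v x = W *\<^sub>v y"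
  have xc: "x \<in> carrier_vec nc" and yc: "y \<in> carrier_vec nc"
    using mat_kernelD(1)[OF A] x y by auto
  have "A *\<^sub>v (x - y) = 0\<^sub>v nr"
    using mult_minus_distrib_mat_vec[OF A xc yc] mat_kernelD(2)[OF A x] mat_kernelD(2)[OF A y] by simp
  then have "x - y \<in> mat_kernel A"
    using xc yc by (intro mat_kernelI[OF A]) auto
  moreover have "W *\<^sub>v (x - y) = 0\<^sub>v N"
    using mult_minus_distrib_mat_vec[OF W xc yc] e W yc by simp
  ultimately have "x - y = 0\<^sub>v nc" by (rule inj)
  then have "x $ i = y $ i" if "i < nc" for i
    using that xc yc by (metis index_minus_vec(1) index_zero_vec(1) carrier_vecD right_minus_eq)
  then show "x = y" using xc yc by (intro eq_vecI) auto
qed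

lemma kernel_dim_le_of_inj_on_kernel:
  fixes A :: "'a::field mat"
  assumes A: "A \<in> carrier_mat nr nc" and C: "C \<in> carrier_mat N N" and W: "W \<in> carrier_mat N nc"
    and CW: "\<And>x. x \<in> mat_kernel A \<Longrightarrow> C *\<^sub>v (W *\<^sub>v x) = 0\<^sub>v N"
    and inj: "\<And>x. x \<in> mat_kernel A \<Longrightarrow> W *\<^sub>v x = 0\<^sub>v N \<Longrightarrow> x = 0\<^sub>v nc"
  shows "kernel.dim nc A \<le> kernel_dim C"
proof -
  interpret KA: kernel nr nc A by unfold_locales (rule A)
  interpret KC: kernel N N C by unfold_locales (rule C)
  obtain B where finB: "finite B" and bas: "KA.basis B" using kernel_basis_exists[OF A] by blast
  have BK: "B \<subseteq> mat_kernel A" and liB: "KA.lin_indpt B" using bas unfolding KA.Ker.basis_def by auto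
  have Kc: "x \<in> carrier_vec nc" if "x \<in> mat_kernel A" for x using mat_kernelD(1)[OF A that] .
  have injK: "inj_on (\<lambda>x. W *\<^sub>v x) (mat_kernel A)"
    by (rule inj_on_mult_mat_vec_kernel[OF A W inj])
  let ?S = "(\<lambda>x. W *\<^sub>v x) ` B"
  have SK: "?S \<subseteq> mat_kernel C"
    using BK CW Kc W by (auto intro!: mat_kernelI[OF C])
  have "KC.lin_indpt ?S"
  proof
    assume "KC.lin_dep ?S"
    then obtain U a v where finU: "finite U" and US: "U \<subseteq> ?S" and lc: "KC.lincomb a U = 0\<^sub>v N"
      and vU: "v \<in> U" and av: "a v \<noteq> 0"
      unfolding KC.Ker.lin_dep_def by auto
    define U0 where "U0 = {x\<in>B. W *\<^sub>v x \<in> U}"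
    have U0B: "U0 \<subseteq> B" and imU0: "(\<lambda>x. W *\<^sub>v x) ` U0 = U"
      using US by (auto simp: U0_def)
    have injU0: "inj_on (\<lambda>x. W *\<^sub>v x) U0"
      using inj_on_subset[OF injK] U0B BK by blast
    define z where "z = KA.lincomb (\<lambda>x. a (W *\<^sub>v x)) U0"
    have "W *\<^sub>v z = vec N (\<lambda>i. \<Sum>u\<in>U. a u * u $ i)"
      unfolding z_def KA.mult_mat_vec_lincomb[OF W order.trans[OF U0B BK]] imU0[symmetric]
      by (simp add: sum.reindex[OF injU0])
    also have "\<dots> = 0\<^sub>v N"
    proof (rule eq_vecI)
      fix i assume "i < dim_vec (0\<^sub>v N)"
      then have i: "i < N" by simp
      have "(\<Sum>u\<in>U. a u * u $ i) = KC.lincomb a U $ i"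
        using KC.lincomb_index[OF i order.trans[OF US SK]] by simp
      then show "vec N (\<lambda>i. \<Sum>u\<in>U. a u * u $ i) $ i = 0\<^sub>v N $ i"
        using i lc by simp
    qed simp
    finally have "z = 0\<^sub>v nc"
      by (intro inj) (use order.trans[OF U0B BK] in \<open>auto simp: z_def intro!: KA.Ker.lincomb_closed\<close>)
    moreover obtain x0 where "x0 \<in> U0" "v = W *\<^sub>v x0" using vU imU0 by blast
    ultimately have "KA.lin_dep B"
      unfolding KA.Ker.lin_dep_def using finB U0B av
      by (intro exI[of _ U0] exI[of _ "\<lambda>x. a (W *\<^sub>v x)"] exI[of _ x0])
        (auto simp: z_def intro: finite_subset)
    with liB show False by simp
  qed
  moreover have "KC.Ker.fin_dim"
    using kernel_basis_exists[OF C] unfolding KC.Ker.fin_dim_def KC.Ker.basis_def by blast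
  ultimately have "card ?S \<le> KC.dim"
    using SK by (intro KC.Ker.li_le_dim(2))
  moreover have "card ?S = card B" using inj_on_subset[OF injK BK] by (rule card_image)
  ultimately show ?thesis
    using KA.Ker.dim_basis[OF finB bas] by simp
qed

lemma subset_list: "distinct (subset_list n r)" "set (subset_list n r) = msubsets n r"
proof -
  obtain xs where "set xs = msubsets n r \<and> distinct xs"
    using finite_distinct_list[OF finite_msubsets] by blast
  then have "\<exists>xs. distinct xs \<and> set xs = msubsets n r" by blast
  then show "distinct (subset_list n r)" "set (subset_list n r) = msubsets n r"
    unfolding subset_list_def by (metis (mono_tags, lifting) someI_ex)+
qed

lemma length_subset_list: "length (subset_list n r) = n choose r"
  using distinct_card[OF subset_list(1)] subset_list(2) card_msubsets by metis

lemma nth_subset_list: "i < length (subset_list n r) \<Longrightarrow> subset_list n r ! i \<in> msubsets n r"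
  using subset_list(2) nth_mem by blast

lemma sum_msubsets_eq_sum_subset_list:
  "sum f (msubsets n r) = (\<Sum>i<length (subset_list n r). f (subset_list n r ! i))"
proof -
  let ?L = "subset_list n r"
  have "msubsets n r = (nth ?L) ` {..<length ?L}"
    using subset_list(2)[of n r] by (auto simp: set_conv_nth)
  moreover have "inj_on (nth ?L) {..<length ?L}"
    using subset_list(1) by (intro inj_on_nth) auto
  ultimately show ?thesis by (simp add: sum.reindex)
qed

definition subset_index :: "nat \<Rightarrow> nat \<Rightarrow> nat set \<Rightarrow> nat" where
  "subset_index n r \<rho> = (THE i. i < length (subset_list n r) \<and> subset_list n r ! i = \<rho>)"

lemma subset_index_nth: "i < length (subset_list n r) \<Longrightarrow> subset_index n r (subset_list n r ! i) = i"
  unfolding subset_index_def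
  by (rule the_equality) (use subset_list(1)[of n r] nth_eq_iff_index_eq in auto)

definition vec_to_fun :: "nat \<Rightarrow> nat \<Rightarrow> 'a vec \<Rightarrow> nat set \<Rightarrow> 'a" where
  "vec_to_fun n r x \<rho> = x $ subset_index n r \<rho>"

lemma vec_to_fun_nth: "i < length (subset_list n r) \<Longrightarrow> vec_to_fun n r x (subset_list n r ! i) = x $ i"
  by (simp add: vec_to_fun_def subset_index_nth)

lemma sum_vec_to_fun:
  fixes x :: "'a::comm_semiring_1 vec"
  shows "sum (vec_to_fun n r x) {\<rho>\<in>msubsets n r. P \<rho>}
    = (\<Sum>j<length (subset_list n r). (if P (subset_list n r ! j) then 1 else 0) * x $ j)"
proof -
  have "sum (vec_to_fun n r x) {\<rho>\<in>msubsets n r. P \<rho>}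
      = (\<Sum>\<rho>\<in>msubsets n r. if P \<rho> then vec_to_fun n r x \<rho> else 0)"
    by (rule sum.inter_filter) simp
  also have "\<dots> = (\<Sum>j<length (subset_list n r). if P (subset_list n r ! j) then x $ j else 0)"
    unfolding sum_msubsets_eq_sum_subset_list by (intro sum.cong refl) (simp add: vec_to_fun_nth)
  also have "\<dots> = (\<Sum>j<length (subset_list n r). (if P (subset_list n r ! j) then 1 else 0) * x $ j)"
    by (intro sum.cong refl) simp
  finally show ?thesis .
qed

definition fun_to_vec :: "nat \<Rightarrow> nat \<Rightarrow> (nat set \<Rightarrow> 'a) \<Rightarrow> 'a vec" where
  "fun_to_vec n r v = vec (length (subset_list n r)) (\<lambda>i. v (subset_list n r ! i))"

definition down_mat :: "nat \<Rightarrow> nat \<Rightarrow> complex mat" where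
  "down_mat n k = mat (if k = 0 then 0 else length (subset_list n (k - 1))) (length (subset_list n k))
     (\<lambda>(i, j). if subset_list n (k - 1) ! i \<subseteq> subset_list n k ! j then 1 else 0)"

definition up_mat :: "nat \<Rightarrow> nat \<Rightarrow> nat \<Rightarrow> complex mat" where
  "up_mat n m k = mat (length (subset_list n m)) (length (subset_list n k))
     (\<lambda>(i, j). if subset_list n k ! j \<subseteq> subset_list n m ! i then 1 else 0)"

lemma mult_mat_vec_index:
  assumes "A \<in> carrier_mat nr nc" "x \<in> carrier_vec nc" "i < nr"
  shows "(A *\<^sub>v x) $ i = (\<Sum>j<nc. A $$ (i, j) * x $ j)"
  using assms by (simp add: scalar_prod_def atLeast0LessThan)

lemma harmonic_of_down_mat_kernel:
  assumes x: "x \<in> mat_kernel (down_mat n k)"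
  shows "harmonic n k (vec_to_fun n k x)"
  unfolding harmonic_def
proof (intro impI ballI)
  fix \<rho>' assume k: "0 < k" and \<rho>': "\<rho>' \<in> msubsets n (k - 1)"
  let ?Lk = "subset_list n k" and ?Lk1 = "subset_list n (k - 1)"
  have D: "down_mat n k \<in> carrier_mat (length ?Lk1) (length ?Lk)"
    using k unfolding down_mat_def by simp
  have xc: "x \<in> carrier_vec (length ?Lk)" and Dx: "down_mat n k *\<^sub>v x = 0\<^sub>v (length ?Lk1)"
    using mat_kernelD[OF D x] by auto
  obtain i where i: "i < length ?Lk1" "?Lk1 ! i = \<rho>'"
    using \<rho>' subset_list(2) by (metis in_set_conv_nth)
  have "sum (vec_to_fun n k x) {\<rho>\<in>msubsets n k. \<rho>' \<subseteq> \<rho>}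
      = (\<Sum>j<length ?Lk. (if \<rho>' \<subseteq> ?Lk ! j then 1 else 0) * x $ j)"
    by (rule sum_vec_to_fun)
  also have "\<dots> = (down_mat n k *\<^sub>v x) $ i"
    using mult_mat_vec_index[OF D xc i(1)] i k by (auto simp: down_mat_def intro!: sum.cong)
  also have "\<dots> = 0" using Dx i by simp
  finally show "sum (vec_to_fun n k x) {\<rho>\<in>msubsets n k. \<rho>' \<subseteq> \<rho>} = 0" .
qed

lemma up_mat_mult_vec:
  assumes "x \<in> carrier_vec (length (subset_list n k))"
  shows "up_mat n m k *\<^sub>v x = fun_to_vec n m (up_op n k (vec_to_fun n k x))"
proof (rule eq_vecI)
  let ?Lk = "subset_list n k" and ?Lm = "subset_list n m"
  have W: "up_mat n m k \<in> carrier_mat (length ?Lm) (length ?Lk)" unfolding up_mat_def by simp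
  fix i assume "i < dim_vec (fun_to_vec n m (up_op n k (vec_to_fun n k x)))"
  then have i: "i < length ?Lm" by (simp add: fun_to_vec_def)
  have "(up_mat n m k *\<^sub>v x) $ i = (\<Sum>j<length ?Lk. (if ?Lk ! j \<subseteq> ?Lm ! i then 1 else 0) * x $ j)"
    using mult_mat_vec_index[OF W assms i] i by (simp add: up_mat_def)
  also have "\<dots> = up_op n k (vec_to_fun n k x) (?Lm ! i)"
    unfolding up_op_def by (rule sum_vec_to_fun[symmetric])
  finally show "(up_mat n m k *\<^sub>v x) $ i = fun_to_vec n m (up_op n k (vec_to_fun n k x)) $ i"
    using i by (simp add: fun_to_vec_def)
qed (simp add: up_mat_def fun_to_vec_def)

lemma Bmat_carrier: "Bmat n m b \<in> carrier_mat (length (subset_list n m)) (length (subset_list n m))"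
  unfolding Bmat_def by simp

lemma Bmat_mult_vec: "Bmat n m b *\<^sub>v fun_to_vec n m v = fun_to_vec n m (Bop n m b v)"
proof (rule eq_vecI)
  let ?L = "subset_list n m"
  fix i assume "i < dim_vec (fun_to_vec n m (Bop n m b v))"
  then have i: "i < length ?L" by (simp add: fun_to_vec_def)
  have "(Bmat n m b *\<^sub>v fun_to_vec n m v) $ i = (\<Sum>j<length ?L. b (card (?L ! i \<inter> ?L ! j)) * v (?L ! j))"
    using mult_mat_vec_index[OF Bmat_carrier _ i, of "fun_to_vec n m v" b] i
    by (auto simp: Bmat_def fun_to_vec_def intro!: sum.cong)
  also have "\<dots> = Bop n m b v (?L ! i)"
    unfolding Bop_def sum_msubsets_eq_sum_subset_list ..
  finally show "(Bmat n m b *\<^sub>v fun_to_vec n m v) $ i = fun_to_vec n m (Bop n m b v) $ i"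
    using i by (simp add: fun_to_vec_def)
qed (simp add: Bmat_def fun_to_vec_def)

lemma fun_to_vec_eq_zero_iff:
  "fun_to_vec n r v = 0\<^sub>v (length (subset_list n r)) \<longleftrightarrow> (\<forall>\<sigma>\<in>msubsets n r. v \<sigma> = 0)"
proof -
  have "(\<forall>i<length (subset_list n r). v (subset_list n r ! i) = 0) \<longleftrightarrow> (\<forall>\<sigma>\<in>msubsets n r. v \<sigma> = 0)"
    by (metis in_set_conv_nth nth_subset_list subset_list(2))
  then show ?thesis
    by (auto simp: fun_to_vec_def vec_eq_iff)
qed

lemma char_matrix_mult_vec:
  assumes A: "A \<in> carrier_mat N N" and y: "y \<in> carrier_vec N"
  shows "char_matrix A e *\<^sub>v y = A *\<^sub>v y - e \<cdot>\<^sub>v y"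
proof (rule eq_vecI)
  fix i assume "i < dim_vec (A *\<^sub>v y - e \<cdot>\<^sub>v y)"
  then have i: "i < N" using A y by simp
  have "(char_matrix A e *\<^sub>v y) $ i = (\<Sum>j<N. (A $$ (i, j) + (if i = j then - e else 0)) * y $ j)"
    using mult_mat_vec_index[OF char_matrix_closed[OF A] y i] A i
    by (auto simp: char_matrix_def intro!: sum.cong)
  also have "\<dots> = (\<Sum>j<N. A $$ (i, j) * y $ j) + (\<Sum>j<N. if i = j then - e * y $ j else 0)"
    by (simp add: distrib_right sum.distrib if_distrib[of "\<lambda>c. c * _"] cong: if_cong)
  also have "\<dots> = (A *\<^sub>v y - e \<cdot>\<^sub>v y) $ i"
    using mult_mat_vec_index[OF A y i] A y i by simp
  finally show "(char_matrix A e *\<^sub>v y) $ i = (A *\<^sub>v y - e \<cdot>\<^sub>v y) $ i" .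
qed (use A y carrier_matD(1)[OF char_matrix_closed[OF A]] in simp)

theorem kernel_dim_down_mat_le_eigenspace:
  assumes "k \<le> m" "2 * m \<le> n"
  shows "kernel.dim (length (subset_list n k)) (down_mat n k)
    \<le> kernel_dim (char_matrix (Bmat n m b) (lam n m k b))"
proof (rule kernel_dim_le_of_inj_on_kernel)
  let ?Lk = "subset_list n k" and ?Lm = "subset_list n m"
  show D: "down_mat n k \<in> carrier_mat (if k = 0 then 0 else length (subset_list n (k - 1))) (length ?Lk)"
    unfolding down_mat_def by simp
  show "up_mat n m k \<in> carrier_mat (length ?Lm) (length ?Lk)"
    unfolding up_mat_def by simp
  show "char_matrix (Bmat n m b) (lam n m k b) \<in> carrier_mat (length ?Lm) (length ?Lm)"
    using Bmat_carrier by simp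
  fix x assume x: "x \<in> mat_kernel (down_mat n k)"
  have xc: "x \<in> carrier_vec (length ?Lk)" using mat_kernelD(1)[OF D x] .
  note harm = harmonic_of_down_mat_kernel[OF x]
  let ?w = "up_op n k (vec_to_fun n k x)"
  have "Bop n m b ?w \<sigma> = lam n m k b * ?w \<sigma>" if "\<sigma> \<in> msubsets n m" for \<sigma>
    using Bop_up_op_harmonic[OF harm _ _ that] assms by simp
  then have eigen: "fun_to_vec n m (Bop n m b ?w) = lam n m k b \<cdot>\<^sub>v fun_to_vec n m ?w"
    by (auto simp: fun_to_vec_def nth_subset_list)
  have y: "fun_to_vec n m ?w \<in> carrier_vec (length ?Lm)" by (simp add: fun_to_vec_def)
  show "char_matrix (Bmat n m b) (lam n m k b) *\<^sub>v (up_mat n m k *\<^sub>v x) = 0\<^sub>v (length ?Lm)"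
    unfolding up_mat_mult_vec[OF xc] char_matrix_mult_vec[OF Bmat_carrier y] Bmat_mult_vec eigen
    by (rule minus_cancel_vec) (use y in simp)
  assume "up_mat n m k *\<^sub>v x = 0\<^sub>v (length ?Lm)"
  then have "\<forall>\<sigma>\<in>msubsets n m. ?w \<sigma> = 0"
    unfolding up_mat_mult_vec[OF xc] fun_to_vec_eq_zero_iff .
  then have "vec_to_fun n k x \<rho> = 0" if "\<rho> \<in> msubsets n k" for \<rho>
    using harmonic_up_op_inj[OF harm _ _ _ that] assms by simp
  then show "x = 0\<^sub>v (length ?Lk)"
  proof (intro eq_vecI)
    fix i assume "i < dim_vec (0\<^sub>v (length ?Lk))"
    then have i: "i < length ?Lk" by simp
    then have "x $ i = vec_to_fun n k x (?Lk ! i)" by (simp add: vec_to_fun_nth)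
    with i show "x $ i = 0\<^sub>v (length ?Lk) $ i"
      using \<open>\<And>\<rho>. \<rho> \<in> msubsets n k \<Longrightarrow> vec_to_fun n k x \<rho> = 0\<close> nth_subset_list by simp
  qed (use xc in simp)
qed

definition two_row_dim :: "nat \<Rightarrow> nat \<Rightarrow> nat" where
  "two_row_dim n k = (n choose k) - (if k = 0 then 0 else n choose (k - 1))"

lemma sum_two_row_dim:
  assumes "2 * m \<le> n"
  shows "(\<Sum>j\<le>m. two_row_dim n j) = n choose m"
  using assms
proof (induction m)
  case (Suc m)
  then have "n choose m \<le> n choose Suc m" by (intro binomial_mono) auto
  with Suc show ?case by (simp add: two_row_dim_def)
qed (simp add: two_row_dim_def)

lemma two_row_dim_mult_fact:
  assumes "2 * k \<le> n"
  shows "two_row_dim n k * (fact k * fact (n - k + 1)) = fact n * (n - 2 * k + 1)"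
proof -
  have "fact (n - k + 1) = (n - k + 1) * (fact (n - k) :: nat)"
    by simp
  then have "(n choose k) * (fact k * fact (n - k + 1)) = (fact k * fact (n - k) * (n choose k)) * (n - k + 1)"
    by (simp only: mult_ac)
  then have top: "(n choose k) * (fact k * fact (n - k + 1)) = fact n * (n - k + 1)"
    using binomial_fact_lemma[of k n] assms by simp
  show ?thesis
  proof (cases k)
    case 0
    then show ?thesis using top by (simp add: two_row_dim_def)
  next
    case (Suc k')
    have "fact k = k * (fact k' :: nat)" "n - k' = n - k + 1"
      using Suc assms by auto
    then have "(n choose k') * (fact k * fact (n - k + 1)) = (fact k' * fact (n - k') * (n choose k')) * k"
      by (simp only: mult_ac)
    then have low: "(n choose k') * (fact k * fact (n - k + 1)) = fact n * k"
      using binomial_fact_lemma[of k' n] Suc assms by simp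
    have "two_row_dim n k * (fact k * fact (n - k + 1))
        = (n choose k) * (fact k * fact (n - k + 1)) - (n choose k') * (fact k * fact (n - k + 1))"
      using Suc by (simp add: two_row_dim_def diff_mult_distrib)
    also have "\<dots> = fact n * (n - k + 1 - k)"
      unfolding top low by (rule diff_mult_distrib2[symmetric])
    also have "n - k + 1 - k = n - 2 * k + 1"
      using assms by simp
    finally show ?thesis .
  qed
qed

lemma two_row_dim_eq:
  assumes "2 * k \<le> n"
  shows "real (two_row_dim n k) = fact n * (real n - 2 * real k + 1) / (fact k * fact (n - k + 1))"
proof -
  have "real (two_row_dim n k * (fact k * fact (n - k + 1))) = real (fact n * (n - 2 * k + 1))"
    by (simp only: two_row_dim_mult_fact[OF assms])
  then have "real (two_row_dim n k) * (fact k * fact (n - k + 1)) = fact n * real (n - 2 * k + 1)"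
    by (simp only: of_nat_mult of_nat_fact)
  moreover have "real (n - 2 * k + 1) = real n - 2 * real k + 1"
    using assms by (simp add: of_nat_diff)
  ultimately show ?thesis
    by (simp add: eq_divide_eq)
qed

theorem eig_mult_Bmat:
  assumes "2 * m \<le> n" "k \<le> m" and inj: "inj_on (\<lambda>j. lam n m j b) {..m}"
  shows "eig_mult (Bmat n m b) (lam n m k b) = two_row_dim n k"
proof -
  let ?ord = "\<lambda>j. Polynomial.order (lam n m j b) (char_poly (Bmat n m b))"
  have le: "two_row_dim n j \<le> ?ord j" if "j \<in> {..m}" for j
  proof -
    have "two_row_dim n j \<le> kernel.dim (length (subset_list n j)) (down_mat n j)"
      using kernel_dim_ge_diff[of "down_mat n j"]
      by (simp add: down_mat_def two_row_dim_def length_subset_list split: if_splits)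
    also have "\<dots> \<le> kernel_dim (char_matrix (Bmat n m b) (lam n m j b))"
      using kernel_dim_down_mat_le_eigenspace[of j m n b] that assms(1) by simp
    also have "\<dots> \<le> ?ord j"
      by (rule kernel_dim_char_matrix_le_order[OF Bmat_carrier])
    finally show ?thesis .
  qed
  have "sum ?ord {..m} \<le> n choose m"
    using sum_order_char_poly_le[OF Bmat_carrier inj] by (simp add: length_subset_list)
  also have "\<dots> = sum (two_row_dim n) {..m}"
    using sum_two_row_dim[OF assms(1)] by simp
  finally have "sum (two_row_dim n) {..m} = sum ?ord {..m}"
    using sum_mono[of "{..m}" "two_row_dim n" ?ord] le by simp
  then show ?thesis
    unfolding eig_mult_def using sum_mono_inv[of "two_row_dim n" "{..m}" ?ord k] le assms(2) by simp
qed

section \<open>Genericity\<close>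

lemma polyfun_sum:
  "finite I \<Longrightarrow> (\<And>i. i \<in> I \<Longrightarrow> f i \<in> polyfun m) \<Longrightarrow> (\<lambda>b. \<Sum>i\<in>I. f i b) \<in> polyfun m"
proof (induction I rule: finite_induct)
  case empty
  show ?case using pconst[of 0 m] by simp
next
  case (insert x F)
  then show ?case using padd[of "f x" m] by simp
qed

lemma polyfun_prod:
  "finite I \<Longrightarrow> (\<And>i. i \<in> I \<Longrightarrow> f i \<in> polyfun m) \<Longrightarrow> (\<lambda>b. \<Prod>i\<in>I. f i b) \<in> polyfun m"
proof (induction I rule: finite_induct)
  case empty
  show ?case using pconst[of 1 m] by simp
next
  case (insert x F)
  then show ?case using pmult[of "f x" m] by simp
qed

lemma polyfun_diff: "P \<in> polyfun m \<Longrightarrow> Q \<in> polyfun m \<Longrightarrow> (\<lambda>b. P b - Q b) \<in> polyfun m"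
  using padd[OF _ pmult[OF pconst[of "-1"]], of P m Q] by simp

lemma lam_polyfun: "k \<le> m \<Longrightarrow> lam n m k \<in> polyfun m"
  unfolding lam_def by (intro polyfun_sum pmult pconst pvar) auto

definition lam_discr :: "nat \<Rightarrow> nat \<Rightarrow> (nat \<Rightarrow> complex) \<Rightarrow> complex" where
  "lam_discr n m b = (\<Prod>i\<le>m. \<Prod>j\<in>{..m} - {i}. lam n m i b - lam n m j b)"

lemma lam_discr_polyfun: "lam_discr n m \<in> polyfun m"
  unfolding lam_discr_def[abs_def] by (intro polyfun_prod polyfun_diff lam_polyfun) auto

lemma lam_discr_nonzero_iff: "lam_discr n m b \<noteq> 0 \<longleftrightarrow> inj_on (\<lambda>j. lam n m j b) {..m}"
  unfolding lam_discr_def inj_on_def by (auto simp: prod_zero_iff)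

(* With these weights B is the adjacency matrix of the Johnson graph J(n,m). *)
definition johnson_weight :: "nat \<Rightarrow> nat \<Rightarrow> complex" where
  "johnson_weight m s = (if s + 1 = m then 1 else 0)"

lemma superset_weight_johnson:
  "superset_weight n m j (johnson_weight m) i = (if i < m \<and> m - 1 - i \<le> m - j
     then of_nat ((m - i) choose (m - 1 - i)) * of_nat ((n - m - j + i) choose (m - j - (m - 1 - i))) else 0)"
proof -
  let ?F = "\<lambda>p. of_nat ((m - i) choose p) * of_nat ((n - m - j + i) choose (m - j - p)) :: complex"
  have "superset_weight n m j (johnson_weight m) i = (\<Sum>p\<in>{0..m-j}. if p = m - 1 - i then (if i < m then ?F p else 0) else 0)"
    unfolding superset_weight_def johnson_weight_def
    by (intro sum.cong refl) auto
  also have "\<dots> = (if m - 1 - i \<in> {0..m-j} then (if i < m then ?F (m - 1 - i) else 0) else 0)"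
    by (rule sum.delta) simp
  finally show ?thesis by auto
qed

lemma lam_johnson:
  assumes "j \<le> m" "2 * m \<le> n"
  shows "lam n m j (johnson_weight m) = of_int (int (m - j) * int (n - m - j) - int j)"
proof -
  let ?h = "\<lambda>i. (-1) ^ (j - i) * of_nat (j choose i) * superset_weight n m j (johnson_weight m) i :: complex"
  have "lam n m j (johnson_weight m) = (\<Sum>i\<in>{0..j}. ?h i)"
    unfolding lam_eq_superset_weight ..
  also have "\<dots> = (\<Sum>i\<in>{0..j} \<inter> {j - 1, j}. ?h i)"
    by (rule sum.mono_neutral_right) (use assms(1) in \<open>auto simp: superset_weight_johnson\<close>)
  also have "\<dots> = (if 0 < j then ?h (j - 1) else 0) + ?h j"
    by (cases j) auto
  also have "(if 0 < j then ?h (j - 1) else 0) = - (of_nat j * of_nat (m - j + 1))"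
  proof (cases j)
    case (Suc j')
    then have "m - j' = Suc (m - j)" "m - 1 - j' = m - j" using assms(1) by auto
    then show ?thesis using Suc assms(1) by (simp add: superset_weight_johnson algebra_simps)
  qed simp
  also have "?h j = of_nat (m - j) * of_nat (n - m)"
  proof (cases "j < m")
    case True
    then have "m - j = Suc (m - 1 - j)" "m - j - (m - 1 - j) = 1" "n - m - j + j = n - m"
      using assms by auto
    then show ?thesis using True by (simp add: superset_weight_johnson)
  qed (use assms(1) in \<open>simp add: superset_weight_johnson\<close>)
  finally show ?thesis
    using assms by (simp add: of_nat_diff algebra_simps)
qed

lemma inj_on_lam_johnson:
  assumes "2 * m \<le> n"
  shows "inj_on (\<lambda>j. lam n m j (johnson_weight m)) {..m}"
proof -
  let ?t = "\<lambda>j. int (m - j) * int (n - m - j) - int j"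
  have dec: "?t j < ?t i" if "i < j" "j \<le> m" for i j
  proof -
    have "?t i - ?t j = (int j - int i) * (int n - int i - int j + 1)"
      using that assms by (simp add: of_nat_diff algebra_simps)
    moreover have "0 < int j - int i" "0 < int n - int i - int j + 1" using that assms by auto
    ultimately show ?thesis by (metis diff_gt_0_iff_gt mult_pos_pos)
  qed
  have "i = j" if "i \<le> m" "j \<le> m" "?t i = ?t j" for i j
    using dec[of i j] dec[of j i] that by (cases i j rule: linorder_cases) auto
  then show ?thesis
    unfolding inj_on_def using assms by (auto simp: lam_johnson simp del: of_int_diff)
qed

theorem theorem1:
  fixes n m k :: nat
  assumes "n > 0" and "m \<le> n div 2" and "k \<le> m"
  shows "(\<forall>b. (\<exists>\<sigma>\<in>msubsets n m. pi_ck n m k \<sigma> \<noteq> 0) \<and>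
            (\<forall>\<sigma>\<in>msubsets n m. Bop n m b (pi_ck n m k) \<sigma> = lam n m k b * pi_ck n m k \<sigma>))
       \<and> (\<exists>P\<in>polyfun m. (\<exists>b. P b \<noteq> 0) \<and>
            (\<forall>b. P b \<noteq> 0 \<longrightarrow>
               real (eig_mult (Bmat n m b) (lam n m k b))
                 = fact n * (real n - 2 * real k + 1) / (fact k * fact (n - k + 1))))"
proof -
  have m: "2 * m \<le> n" using assms(2) by simp
  have "real (eig_mult (Bmat n m b) (lam n m k b))
      = fact n * (real n - 2 * real k + 1) / (fact k * fact (n - k + 1))"
    if "lam_discr n m b \<noteq> 0" for b
    using eig_mult_Bmat[OF m assms(3)] two_row_dim_eq[of k n] that assms(2,3)
    by (simp add: lam_discr_nonzero_iff)
  moreover have "\<exists>b. lam_discr n m b \<noteq> 0"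
    using inj_on_lam_johnson[OF m] lam_discr_nonzero_iff by blast
  ultimately show ?thesis
    using pi_ck_eigenvector[OF assms(3) m] lam_discr_polyfun by blast
qed

end
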